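(* Let $R$ be a discrete valuation ring with maximal ideal $pR$, $F=R/pR$, and $\eta\colon R^m\to R^n$ a nonzero $R$-homomorphism; let $l$ be the largest integer with $e_l(\eta)\neq0$. (1) Choose subsets $\mathcal{B}_{l+1},\mathcal{B}_l,\dots,\mathcal{B}_0$ of $R^m$ such that $\mathcal{B}_{l+1}\subseteq\ker\eta$, $\mathcal{B}_i\subseteq M_i(\eta)$ for $0\le i\le l$, the reductions $\overline{\mathcal{B}_{l+1}}$ form a basis of $\overline{\ker\eta}$, and for each $i\le l$ the reductions of $\mathcal{B}_i\cup\cdots\cup\mathcal{B}_{l+1}$ form a basis of $\overline{M_i(\eta)}$ extending the chosen basis of $\overline{M_{i+1}(\eta)}$ (with $M_{l+1}$ replaced by $\ker\eta$ at the first step). Then $\mathcal{B}=\bigcup_{i=0}^{l+1}\mathcal{B}_i$ is a left SNF basis for $\eta$. (2) Choose subsets $\mathcal{C}_0,\dots,\mathcal{C}_l$ of $R^n$ with $\mathcal{C}_i\subseteq N_i(\eta)$ such that, for each $i$, the reductions of $\mathcal{C}_0\cup\cdots\cup\mathcal{C}_i$ form a basis of $\overline{N_i(\eta)}$; let $\mathcal{C}_{l+1}$ be any subset of $R^n$ such that $\bigcup_{i=0}^{l+1}\mathcal{C}_i$ is an $R$-basis of $R^n$ (possible since $\bigcup_{i\le l}\mathcal{C}_i$ is a basis of the direct summand $N_l(\eta)$). Then $\mathcal{C}=\bigcup_{i=0}^{l+1}\mathcal{C}_i$ is a right SNF basis for $\eta$.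
   Context: $M_i(\eta)=\{x\in R^m:\eta(x)\in p^iR^n\}$, $N_i(\eta)=\{p^{-i}\eta(x):x\in M_i(\eta)\}$; for an $R$-submodule $L\subseteq R^k$, $\overline{L}=(L+pR^k)/pR^k$. $e_i(\eta)$ is the multiplicity of $p^i$ as an elementary divisor of $\eta$. A left (resp. right) SNF basis for $\eta$ is a basis of $R^m$ (resp. $R^n$) belonging to some pair (basis of $R^m$, basis of $R^n$) with respect to which the matrix of $\eta$ is diagonal. *)

theory Defs
  imports "HOL-Analysis.Finite_Cartesian_Product"
begin

text \<open>R is modelled as a type of class idom; p generates the maximal ideal of the
DVR R: p is a nonzero non-unit and every nonzero element is a unit times a power of p.\<close>
definition dvr_unif :: "'a::idom \<Rightarrow> bool" where
  "dvr_unif p \<longleftrightarrow> p \<noteq> 0 \<and> \<not> p dvd 1 \<and>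
     (\<forall>x. x \<noteq> 0 \<longrightarrow> (\<exists>u k. u dvd 1 \<and> x = u * p ^ k))"

definition smul_set :: "'a::idom \<Rightarrow> ('a ^ 'k) set" where
  "smul_set c = range (\<lambda>y. c *s y)"

definition rbasis :: "('a::idom ^ 'k) set \<Rightarrow> bool" where
  "rbasis S \<longleftrightarrow>
     (\<forall>T c. finite T \<and> T \<subseteq> S \<and> (\<Sum>t\<in>T. c t *s t) = 0 \<longrightarrow> (\<forall>t\<in>T. c t = 0)) \<and>
     (\<forall>x. \<exists>T c. finite T \<and> T \<subseteq> S \<and> x = (\<Sum>t\<in>T. c t *s t))"

text \<open>The reductions mod p of the elements of B form an F-basis of
 (L + pR^k)/pR^k, where F = R/pR (written out in terms of R).\<close>
definition modp_basis :: "'a::idom \<Rightarrow> ('a ^ 'k) set \<Rightarrow> ('a ^ 'k) set \<Rightarrow> bool" where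
  "modp_basis p L B \<longleftrightarrow>
     (\<forall>b\<in>B. \<exists>x\<in>L. b - x \<in> smul_set p) \<and>
     (\<forall>b\<in>B. \<forall>b'\<in>B. b - b' \<in> smul_set p \<longrightarrow> b = b') \<and>
     (\<forall>T c. finite T \<and> T \<subseteq> B \<and> (\<Sum>t\<in>T. c t *s t) \<in> smul_set p \<longrightarrow> (\<forall>t\<in>T. p dvd c t)) \<and>
     (\<forall>x\<in>L. \<exists>T c. finite T \<and> T \<subseteq> B \<and> x - (\<Sum>t\<in>T. c t *s t) \<in> smul_set p)"

text \<open>eta : R^m -> R^n is given by its matrix A, eta x = A *v x.\<close>
definition kerset :: "'a::idom ^ 'm ^ 'n \<Rightarrow> ('a ^ 'm) set" where
  "kerset A = {x. A *v x = 0}"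

definition Mset :: "'a::idom \<Rightarrow> 'a ^ 'm ^ 'n \<Rightarrow> nat \<Rightarrow> ('a ^ 'm) set" where
  "Mset p A i = {x. A *v x \<in> smul_set (p ^ i)}"

definition Nset :: "'a::idom \<Rightarrow> 'a ^ 'm ^ 'n \<Rightarrow> nat \<Rightarrow> ('a ^ 'n) set" where
  "Nset p A i = {y. \<exists>x\<in>Mset p A i. A *v x = p ^ i *s y}"

text \<open>Ordered bases bb (of R^m) and cc (of R^n), indexed by 0..m-1 and 0..n-1, with
respect to which the matrix of eta is diagonal with diagonal entries d.\<close>
definition snf_pair :: "'a::idom ^ 'm::finite ^ 'n::finite \<Rightarrow> (nat \<Rightarrow> 'a ^ 'm) \<Rightarrow> (nat \<Rightarrow> 'a ^ 'n) \<Rightarrow> (nat \<Rightarrow> 'a) \<Rightarrow> bool" where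
  "snf_pair A bb cc d \<longleftrightarrow>
     inj_on bb {..<CARD('m)} \<and> rbasis (bb ` {..<CARD('m)}) \<and>
     inj_on cc {..<CARD('n)} \<and> rbasis (cc ` {..<CARD('n)}) \<and>
     (\<forall>j < min CARD('m) CARD('n). A *v bb j = d j *s cc j) \<and>
     (\<forall>j. min CARD('m) CARD('n) \<le> j \<and> j < CARD('m) \<longrightarrow> A *v bb j = 0)"

definition left_snf_basis :: "'a::idom ^ 'm::finite ^ 'n::finite \<Rightarrow> ('a ^ 'm) set \<Rightarrow> bool" where
  "left_snf_basis A B \<longleftrightarrow> (\<exists>bb cc d. snf_pair A bb cc d \<and> B = bb ` {..<CARD('m)})"

definition right_snf_basis :: "'a::idom ^ 'm::finite ^ 'n::finite \<Rightarrow> ('a ^ 'n) set \<Rightarrow> bool" where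
  "right_snf_basis A C \<longleftrightarrow> (\<exists>bb cc d. snf_pair A bb cc d \<and> C = cc ` {..<CARD('n)})"

text \<open>e_i(eta): number of diagonal entries of (some) Smith normal form associated to p^i.\<close>
definition elem_div_mult :: "'a::idom \<Rightarrow> 'a ^ 'm::finite ^ 'n::finite \<Rightarrow> nat \<Rightarrow> nat" where
  "elem_div_mult p A i =
     (let d = (SOME d. \<exists>bb cc. snf_pair A bb cc d) in
      card {j. j < min CARD('m) CARD('n) \<and> (\<exists>u. u dvd 1 \<and> d j = u * p ^ i)})"

end

(*
  Fix a Smith normal form of eta. As no elementary divisor exceeds p^l, every element of
  M_(l+1) is congruent modulo p to an element of the kernel, N_k is contained in N_l for
  every k, and the kernel has a finite basis.

  (1) The union B is independent and spanning modulo p, hence a basis of R^m (Nakayama).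
  Each b in B outside the kernel satisfies eta b = p^i c_b with i <= l maximal. The c_b are
  independent modulo p: a relation with a coefficient prime to p at an element of maximal
  level i lifts to an element of M_(i+1) whose expansion in B contradicts the choice of
  the B_j. Completing the c_b to a basis of R^n gives the right basis matched with B.

  (2) Lift every c in C_i (i <= l) to some x_c with eta x_c = p^i c. By induction on k, the
  coefficient at c of any element of the image of eta, expanded in C, is divisible by
  p^min(k, i), respectively by p^k if c lies in C_(l+1). Hence the image lies in the span
  of the p^i c, and the lifts x_c together with a basis of the kernel form a basis of R^m
  matched with C.
*)

theory Submission
  imports Defs
begin

section \<open>Free modules over a discrete valuation ring\<close>

lemma matrix_vector_mult_smult: "(A::'a::comm_ring_1^'m^'n) *v (c *s x) = c *s (A *v x)"
  by (simp add: matrix_vector_mult_def vec_eq_iff sum_distrib_left algebra_simps)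

lemma matrix_vector_mult_sum: "(A::'a::comm_ring_1^'m^'n) *v (\<Sum>i\<in>S. f i) = (\<Sum>i\<in>S. A *v f i)"
  by (induct S rule: infinite_finite_induct) (simp_all add: matrix_vector_right_distrib)

lemma vector_sum_smult: "(\<Sum>i\<in>S. f i) *s (x::'a::semiring_1^'k) = (\<Sum>i\<in>S. f i *s x)"
  by (simp add: vec_eq_iff sum_distrib_right)

lemma bchoice_dvd: "\<forall>b\<in>S. q b dvd f b \<Longrightarrow> \<exists>g. \<forall>b\<in>S. f b = q b * g b"
  unfolding dvd_def by (rule bchoice)

lemma sum_smult_delta:
  assumes "k < (N::nat)"
  shows "(\<Sum>j<N. (if j = k then a else 0) *s (f j::'a::ring^'n)) = a *s f k"
proof -
  have "(\<Sum>j<N. (if j = k then a else 0) *s f j) = (\<Sum>j<N. if j = k then a *s f j else 0)"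
    by (rule sum.cong) auto
  also have "\<dots> = a *s f k" using assms by (simp add: sum.delta)
  finally show ?thesis .
qed

lemma sum_smult_extend:
  assumes "finite U" "T \<subseteq> U"
  shows "(\<Sum>t\<in>U. (if t \<in> T then c t else 0) *s (t::'a::ring^'k)) = (\<Sum>t\<in>T. c t *s t)"
  by (rule sum.mono_neutral_cong_right) (use assms in auto)

lemma sum_smult_image_as_indexed:
  assumes inj: "inj_on f {..<N::nat}" and T: "T \<subseteq> f ` {..<N}"
  shows "(\<Sum>t\<in>T. c t *s t) = (\<Sum>j<N. (if f j \<in> T then c (f j) else 0) *s (f j::'a::ring^'k))"
proof -
  have "(\<Sum>j<N. (if f j \<in> T then c (f j) else 0) *s f j) = (\<Sum>j\<in>{j\<in>{..<N}. f j \<in> T}. c (f j) *s f j)"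
    by (rule sum.mono_neutral_cong_right) auto
  also have "\<dots> = (\<Sum>t\<in>f ` {j\<in>{..<N}. f j \<in> T}. c t *s t)"
    by (rule sum.reindex[symmetric, unfolded comp_def]) (rule inj_on_subset[OF inj], auto)
  also have "f ` {j\<in>{..<N}. f j \<in> T} = T" using T by auto
  finally show ?thesis by simp
qed

lemma smul_set_iff: "(x::'a::idom^'k) \<in> smul_set c \<longleftrightarrow> (\<forall>i. c dvd x$i)"
proof
  assume "x \<in> smul_set c" then show "\<forall>i. c dvd x$i" by (auto simp: smul_set_def)
next
  assume h: "\<forall>i. c dvd x$i"
  define y where "y = (\<chi> i. SOME z. x$i = c * z)"
  have "x = c *s y"
    unfolding vec_eq_iff y_def using h by (auto simp: dvd_def intro: someI_ex)
  then show "x \<in> smul_set c" by (auto simp: smul_set_def)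
qed

lemma smul_set_add: "x \<in> smul_set c \<Longrightarrow> y \<in> smul_set c \<Longrightarrow> (x::'a::idom^'k) + y \<in> smul_set c"
  by (simp add: smul_set_iff)

lemma smul_set_diff: "x \<in> smul_set c \<Longrightarrow> y \<in> smul_set c \<Longrightarrow> (x::'a::idom^'k) - y \<in> smul_set c"
  by (simp add: smul_set_iff)

lemma smul_set_zero [simp]: "(0::'a::idom^'k) \<in> smul_set c"
  by (simp add: smul_set_iff)

lemma smul_set_one [simp]: "(x::'a::idom^'k) \<in> smul_set 1"
  by (simp add: smul_set_iff)

lemma smul_set_smultI: "c dvd a \<Longrightarrow> (a *s x::'a::idom^'k) \<in> smul_set c"
  by (simp add: smul_set_iff)

lemma smul_set_smult_mult: "x \<in> smul_set c \<Longrightarrow> (a *s x::'a::idom^'k) \<in> smul_set (a * c)"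
  by (auto simp: smul_set_iff)

lemma smul_set_sum: "(\<And>i. i \<in> S \<Longrightarrow> f i \<in> smul_set c) \<Longrightarrow> (\<Sum>i\<in>S. f i::'a::idom^'k) \<in> smul_set c"
  by (simp add: smul_set_iff dvd_sum)

lemma dvr_unif_nonzero: "dvr_unif p \<Longrightarrow> p \<noteq> 0"
  by (simp add: dvr_unif_def)

lemma dvr_unif_not_unit: "dvr_unif p \<Longrightarrow> \<not> p dvd 1"
  by (simp add: dvr_unif_def)

lemma dvr_unif_unit_if_not_dvd:
  assumes "dvr_unif p" "\<not> p dvd x" shows "x dvd 1"
proof -
  have "x \<noteq> 0" using assms(2) by auto
  then obtain u k where u: "u dvd 1" "x = u * p ^ k" using assms(1) unfolding dvr_unif_def by blast
  with assms(2) have "k = 0" by (cases k) auto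
  with u show ?thesis by simp
qed

lemma dvr_unif_not_all_powers_dvd:
  assumes "dvr_unif p" "x \<noteq> 0" shows "\<exists>k. \<not> p ^ k dvd x"
proof -
  obtain u k where u: "u dvd 1" "x = u * p ^ k" using assms unfolding dvr_unif_def by blast
  have "\<not> p ^ Suc k dvd x"
  proof
    assume "p ^ Suc k dvd x"
    then have "p ^ k * p dvd p ^ k * u" using u by (simp add: mult.commute)
    then have "p dvd u" using dvr_unif_nonzero[OF assms(1)] by simp
    then show False using u(1) dvr_unif_not_unit[OF assms(1)] dvd_trans by blast
  qed
  then show ?thesis by blast
qed

lemma dvr_unif_vec_exact_power:
  assumes "dvr_unif p" "(v::'a::idom^'k) \<noteq> 0"
  shows "\<exists>s. v \<in> smul_set (p ^ s) \<and> v \<notin> smul_set (p ^ Suc s)"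
proof -
  obtain i where "v $ i \<noteq> 0" using assms(2) by (auto simp: vec_eq_iff)
  then obtain k where "\<not> p ^ k dvd v $ i" using dvr_unif_not_all_powers_dvd[OF assms(1)] by blast
  then have ex: "\<exists>s. v \<notin> smul_set (p ^ s)" by (auto simp: smul_set_iff)
  define s where "s = (LEAST s. v \<notin> smul_set (p ^ s))"
  have out: "v \<notin> smul_set (p ^ s)" unfolding s_def by (rule LeastI_ex[OF ex])
  then obtain s' where s': "s = Suc s'" by (cases s) auto
  then have "v \<in> smul_set (p ^ s')" using not_less_Least[of s' "\<lambda>s. v \<notin> smul_set (p ^ s)"] s_def by auto
  with out s' show ?thesis by blast
qed

lemma rbasis_indep:
  "rbasis S \<Longrightarrow> finite T \<Longrightarrow> T \<subseteq> S \<Longrightarrow> (\<Sum>t\<in>T. c t *s t) = 0 \<Longrightarrow> t \<in> T \<Longrightarrow> c t = 0"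
  unfolding rbasis_def by blast

lemma rbasis_span: "rbasis S \<Longrightarrow> \<exists>T c. finite T \<and> T \<subseteq> S \<and> x = (\<Sum>t\<in>T. c t *s t)"
  unfolding rbasis_def by blast

lemma rbasis_nonzero:
  assumes "rbasis S" "b \<in> S" shows "b \<noteq> 0"
proof
  assume "b = 0"
  then have "(\<lambda>_. 1::'a) b = 0" using rbasis_indep[OF assms(1), of "{b}" "\<lambda>_. 1" b] assms(2) by simp
  then show False by simp
qed

definition indexed_basis :: "nat \<Rightarrow> (nat \<Rightarrow> 'a::idom^'k) \<Rightarrow> bool" where
  "indexed_basis N f \<longleftrightarrow> (\<forall>c. (\<Sum>j<N. c j *s f j) = 0 \<longrightarrow> (\<forall>j<N. c j = 0)) \<and>
                   (\<forall>x. \<exists>c. x = (\<Sum>j<N. c j *s f j))"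

lemma indexed_basis_span: "indexed_basis N f \<Longrightarrow> \<exists>c. x = (\<Sum>j<N. c j *s f j)"
  by (simp add: indexed_basis_def)

lemma indexed_basis_indep: "indexed_basis N f \<Longrightarrow> (\<Sum>j<N. c j *s f j) = 0 \<Longrightarrow> j < N \<Longrightarrow> c j = 0"
  by (simp add: indexed_basis_def)

lemma indexed_basis_coeff_eq:
  assumes "indexed_basis N f" "(\<Sum>j<N. c j *s f j) = (\<Sum>j<N. e j *s f j)" "j < N"
  shows "c j = e j"
proof -
  have "(\<Sum>j<N. (c j - e j) *s f j) = 0"
    using assms(2) by (simp add: vector_sub_rdistrib sum_subtractf)
  from indexed_basis_indep[OF assms(1) this assms(3)] show ?thesis by simp
qed

lemma indexed_basis_coeff_dvd:
  assumes "indexed_basis N f" "(\<Sum>j<N. c j *s f j) \<in> smul_set q" "j < N"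
  shows "q dvd c j"
proof -
  obtain w where w: "(\<Sum>j<N. c j *s f j) = q *s w" using assms(2) by (auto simp: smul_set_def)
  obtain e where e: "w = (\<Sum>j<N. e j *s f j)" using indexed_basis_span[OF assms(1)] by blast
  have "(\<Sum>j<N. c j *s f j) = (\<Sum>j<N. (q * e j) *s f j)"
    using w e by (simp add: sum_cmul[symmetric] vector_smult_assoc)
  then have "c j = q * e j" by (rule indexed_basis_coeff_eq[OF assms(1) _ assms(3)])
  then show ?thesis by simp
qed

lemma indexed_basis_inj:
  assumes "indexed_basis N (f::nat \<Rightarrow> 'a::idom^'k)" shows "inj_on f {..<N}"
proof (rule inj_onI)
  fix i j assume ij: "i \<in> {..<N}" "j \<in> {..<N}" "f i = f j"
  define c where "c = (\<lambda>k. if k = i then (1::'a) else 0) - (\<lambda>k. if k = j then 1 else 0)"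
  have "(\<Sum>k<N. c k *s f k) = (\<Sum>k<N. (if k = i then 1 else 0) *s f k) - (\<Sum>k<N. (if k = j then 1 else 0) *s f k)"
    unfolding c_def by (simp add: vector_sub_rdistrib sum_subtractf)
  also have "\<dots> = 0" using ij by (simp add: sum_smult_delta)
  finally have "c i = 0" using indexed_basis_indep[OF assms] ij by blast
  then show "i = j" by (simp add: c_def split: if_splits)
qed

lemma indexed_basis_exchange:
  assumes B: "indexed_basis N (f::nat \<Rightarrow> 'a::idom^'n)" and k: "k < N"
    and v: "v = (\<Sum>j<N. b j *s f j)" and u: "b k dvd 1"
  shows "indexed_basis N (f(k:=v))"
proof -
  have key: "(\<Sum>j<N. c j *s (f(k:=v)) j) = (\<Sum>j<N. ((if j = k then 0 else c j) + c k * b j) *s f j)" for c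
  proof -
    have "(\<Sum>j<N. c j *s (f(k:=v)) j) = (\<Sum>j<N. (if j = k then 0 else c j) *s f j + (if j = k then c k *s v else 0))"
      by (rule sum.cong) auto
    also have "\<dots> = (\<Sum>j<N. (if j = k then 0 else c j) *s f j) + c k *s v"
      using k by (simp add: sum.distrib sum.delta)
    finally show ?thesis
      unfolding v by (simp add: sum_cmul[symmetric] vector_smult_assoc vector_sadd_rdistrib sum.distrib)
  qed
  obtain w where w: "b k * w = 1" using u by (metis dvd_def)
  show ?thesis unfolding indexed_basis_def
  proof safe
    fix c j assume h: "(\<Sum>j<N. c j *s (f(k:=v)) j) = 0" and j: "j < N"
    have h2: "\<forall>j<N. (if j = k then 0 else c j) + c k * b j = 0"
      using indexed_basis_indep[OF B h[unfolded key]] by blast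
    then have "c k * b k = 0" using k by force
    then have "c k = 0" using w by auto
    then show "c j = 0" using h2 j by (cases "j = k") force+
  next
    fix x
    obtain c where c: "x = (\<Sum>j<N. c j *s f j)" using indexed_basis_span[OF B] by blast
    define e where "e = (\<lambda>j. if j = k then c k * w else c j - c k * w * b j)"
    have w': "w * b k = 1" using w by (simp add: mult.commute)
    have "x = (\<Sum>j<N. ((if j = k then 0 else e j) + e k * b j) *s f j)"
      unfolding c by (rule sum.cong) (auto simp: e_def mult.assoc w')
    then show "\<exists>e. x = (\<Sum>j<N. e j *s (f(k:=v)) j)" unfolding key[symmetric] by (rule exI[of _ e])
  qed
qed

lemma indexed_basis_permute:
  assumes B: "indexed_basis N f" and g: "bij_betw g {..<N} {..<N}"
  shows "indexed_basis N (f \<circ> g)"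
proof -
  let ?h = "inv_into {..<N} g"
  have h_g: "?h (g j) = j" if "j < N" for j using g that by (simp add: bij_betw_inv_into_left)
  have g_h: "g (?h j) = j" if "j < N" for j using g that by (simp add: bij_betw_inv_into_right)
  have key: "(\<Sum>j<N. c j *s (f \<circ> g) j) = (\<Sum>j<N. c (?h j) *s f j)" for c
  proof -
    have "(\<Sum>j<N. c (?h j) *s f j) = (\<Sum>j<N. c (?h (g j)) *s f (g j))"
      using sum.reindex_bij_betw[OF g, of "\<lambda>j. c (?h j) *s f j"] by simp
    also have "\<dots> = (\<Sum>j<N. c j *s (f \<circ> g) j)" using h_g by simp
    finally show ?thesis by simp
  qed
  show ?thesis unfolding indexed_basis_def
  proof safe
    fix c j assume h: "(\<Sum>j<N. c j *s (f \<circ> g) j) = 0" and j: "j < N"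
    have "g j < N" using j g by (meson lessThan_iff bij_betwE)
    then have "c (?h (g j)) = 0" using indexed_basis_indep[OF B h[unfolded key]] by blast
    then show "c j = 0" using h_g j by simp
  next
    fix x
    obtain c where c: "x = (\<Sum>j<N. c j *s f j)" using indexed_basis_span[OF B] by blast
    have "x = (\<Sum>j<N. (c \<circ> g) (?h j) *s f j)" unfolding c
      by (rule sum.cong) (auto simp: g_h)
    then show "\<exists>c. x = (\<Sum>j<N. c j *s (f \<circ> g) j)" unfolding key by (rule exI[of _ "c \<circ> g"])
  qed
qed

lemma indexed_basis_shear:
  assumes B: "indexed_basis N (f::nat \<Rightarrow> 'a::idom^'n)" and k: "k < N" and bk: "\<beta> k = 0"
  shows "indexed_basis N (\<lambda>j. f j - \<beta> j *s f k)"
proof -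
  have key: "(\<Sum>j<N. c j *s (f j - \<beta> j *s f k)) = (\<Sum>j<N. (c j - (if j = k then (\<Sum>i<N. c i * \<beta> i) else 0)) *s f j)" for c
    using k by (simp add: vector_ssub_ldistrib vector_sub_rdistrib sum_subtractf sum_smult_delta vector_smult_assoc vector_sum_smult)
  show ?thesis unfolding indexed_basis_def
  proof safe
    fix c j assume h: "(\<Sum>j<N. c j *s (f j - \<beta> j *s f k)) = 0" and j: "j < N"
    have h2: "\<forall>j<N. c j - (if j = k then (\<Sum>i<N. c i * \<beta> i) else 0) = 0"
      using indexed_basis_indep[OF B h[unfolded key]] by blast
    have "(\<Sum>i<N. c i * \<beta> i) = (\<Sum>i<N. if i = k then c k * \<beta> k else 0)"
      by (rule sum.cong) (use h2 in auto)
    also have "\<dots> = 0" using bk by simp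
    finally have "c k = 0" using h2 k by force
    then show "c j = 0" using h2 j by (cases "j = k") force+
  next
    fix x
    obtain c where c: "x = (\<Sum>j<N. c j *s f j)" using indexed_basis_span[OF B] by blast
    define e where "e = (\<lambda>j. c j + (if j = k then (\<Sum>i<N. c i * \<beta> i) else 0))"
    have s: "(\<Sum>i<N. e i * \<beta> i) = (\<Sum>i<N. c i * \<beta> i)"
      by (rule sum.cong) (auto simp: e_def bk)
    have "x = (\<Sum>j<N. (e j - (if j = k then (\<Sum>i<N. e i * \<beta> i) else 0)) *s f j)"
      unfolding c s by (rule sum.cong) (auto simp: e_def)
    then show "\<exists>e. x = (\<Sum>j<N. e j *s (f j - \<beta> j *s f k))" unfolding key[symmetric] by (rule exI[of _ e])
  qed
qed

lemma indexed_basis_exists: "\<exists>f. indexed_basis CARD('k::finite) (f :: nat \<Rightarrow> 'a::idom^'k)"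
proof -
  obtain en where en: "bij_betw en {..<CARD('k)} (UNIV::'k set)"
    using ex_bij_betw_nat_finite[of "UNIV::'k set"] by (auto simp: atLeast0LessThan)
  let ?h = "inv_into {..<CARD('k)} en"
  define f where "f = (\<lambda>j. axis (en j) (1::'a))"
  have key: "(\<Sum>j<CARD('k). c j *s f j) = (\<chi> i. c (?h i))" for c
  proof -
    have "(\<Sum>j<CARD('k). c j *s f j) = (\<Sum>j<CARD('k). c (?h (en j)) *s axis (en j) 1)"
      unfolding f_def by (rule sum.cong) (use en in \<open>auto simp: bij_betw_inv_into_left\<close>)
    also have "\<dots> = (\<Sum>i\<in>UNIV. c (?h i) *s axis i 1)"
      using sum.reindex_bij_betw[OF en, of "\<lambda>i. c (?h i) *s axis i 1"] by simp
    also have "\<dots> = (\<chi> i. c (?h i))"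
      using basis_expansion[of "\<chi> i. c (?h i)"] by simp
    finally show ?thesis .
  qed
  have "indexed_basis CARD('k) f" unfolding indexed_basis_def
  proof safe
    fix c j assume h: "(\<Sum>j<CARD('k). c j *s f j) = 0" and j: "j < CARD('k)"
    have "(\<chi> i. c (?h i)) $ en j = 0" using h unfolding key by simp
    then show "c j = 0" using j en by (simp add: bij_betw_inv_into_left)
  next
    fix x :: "'a^'k"
    have "x = (\<Sum>j<CARD('k). (\<lambda>j. x $ en j) j *s f j)" unfolding key
      using en by (simp add: vec_eq_iff bij_betw_inv_into_right)
    then show "\<exists>c. x = (\<Sum>j<CARD('k). c j *s f j)" by (rule exI[of _ "\<lambda>j. x $ en j"])
  qed
  then show ?thesis by blast
qed

lemma indexed_basis_rbasis:
  assumes B: "indexed_basis N f" shows "rbasis (f ` {..<N})"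
  unfolding rbasis_def
proof safe
  fix T c t assume T: "finite T" "T \<subseteq> f ` {..<N}" and s: "(\<Sum>t\<in>T. c t *s t) = 0" and t: "t \<in> T"
  obtain j where j: "j < N" "t = f j" using T t by auto
  have "(\<Sum>j<N. (if f j \<in> T then c (f j) else 0) *s f j) = 0"
    using s unfolding sum_smult_image_as_indexed[OF indexed_basis_inj[OF B] T(2)] .
  from indexed_basis_indep[OF B this j(1)] show "c t = 0" using j t by simp
next
  fix x
  obtain c where c: "x = (\<Sum>j<N. c j *s f j)" using indexed_basis_span[OF B] by blast
  define d where "d = (\<lambda>t. c (inv_into {..<N} f t))"
  have "(\<Sum>t\<in>f ` {..<N}. d t *s t) = (\<Sum>j<N. (if f j \<in> f ` {..<N} then d (f j) else 0) *s f j)"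
    by (rule sum_smult_image_as_indexed[OF indexed_basis_inj[OF B]]) simp
  also have "\<dots> = x" unfolding c d_def
    by (rule sum.cong) (auto simp: inv_into_f_f[OF indexed_basis_inj[OF B]])
  finally show "\<exists>T c. finite T \<and> T \<subseteq> f ` {..<N} \<and> x = (\<Sum>t\<in>T. c t *s t)"
    by (intro exI[of _ "f ` {..<N}"] exI[of _ d]) auto
qed

lemma rbasis_indexed_basis:
  assumes inj: "inj_on f {..<N}" and R: "rbasis (f ` {..<N})" shows "indexed_basis N f"
  unfolding indexed_basis_def
proof safe
  fix c j assume s: "(\<Sum>j<N. c j *s f j) = 0" and j: "j < N"
  define d where "d = (\<lambda>t. c (inv_into {..<N} f t))"
  have "(\<Sum>t\<in>f ` {..<N}. d t *s t) = (\<Sum>j<N. (if f j \<in> f ` {..<N} then d (f j) else 0) *s f j)"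
    by (rule sum_smult_image_as_indexed[OF inj]) simp
  also have "\<dots> = (\<Sum>j<N. c j *s f j)" unfolding d_def
    by (rule sum.cong) (auto simp: inv_into_f_f[OF inj])
  finally have "(\<Sum>t\<in>f ` {..<N}. d t *s t) = 0" using s by simp
  from rbasis_indep[OF R _ subset_refl this] j have "d (f j) = 0" by simp
  then show "c j = 0" using j inj by (simp add: d_def inv_into_f_f)
next
  fix x
  obtain T c where T: "finite T" "T \<subseteq> f ` {..<N}" "x = (\<Sum>t\<in>T. c t *s t)"
    using rbasis_span[OF R] by blast
  then have "x = (\<Sum>j<N. (if f j \<in> T then c (f j) else 0) *s f j)"
    using sum_smult_image_as_indexed[OF inj T(2)] by simp
  then show "\<exists>c. x = (\<Sum>j<N. c j *s f j)" by (rule exI[of _ "\<lambda>j. if f j \<in> T then c (f j) else 0"])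
qed

section \<open>Independence modulo p\<close>

definition p_indep :: "'a::idom \<Rightarrow> ('a^'k) set \<Rightarrow> bool" where
  "p_indep p S \<longleftrightarrow> (\<forall>T c. finite T \<and> T \<subseteq> S \<and> (\<Sum>t\<in>T. c t *s t) \<in> smul_set p \<longrightarrow> (\<forall>t\<in>T. p dvd c t))"

lemma p_indepD:
  "p_indep p S \<Longrightarrow> finite T \<Longrightarrow> T \<subseteq> S \<Longrightarrow> (\<Sum>t\<in>T. c t *s t) \<in> smul_set p \<Longrightarrow> t \<in> T \<Longrightarrow> p dvd c t"
  unfolding p_indep_def by blast

lemma p_indep_subset: "p_indep p S \<Longrightarrow> S' \<subseteq> S \<Longrightarrow> p_indep p S'"
  unfolding p_indep_def by blast

lemma modp_basis_p_indep: "modp_basis p L B \<Longrightarrow> p_indep p B"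
  unfolding modp_basis_def p_indep_def by blast

lemma modp_basis_span:
  "modp_basis p L B \<Longrightarrow> x \<in> L \<Longrightarrow> \<exists>T c. finite T \<and> T \<subseteq> B \<and> x - (\<Sum>t\<in>T. c t *s t) \<in> smul_set p"
  unfolding modp_basis_def by blast

lemma p_indep_not_congruent:
  assumes p: "\<not> p dvd 1" and S: "p_indep p S" and b: "b \<in> S" and T: "finite T" "T \<subseteq> S" "b \<notin> T"
  shows "b - (\<Sum>t\<in>T. c t *s t) \<notin> smul_set p"
proof
  assume s: "b - (\<Sum>t\<in>T. c t *s t) \<in> smul_set p"
  define c' where "c' = (\<lambda>t. if t = b then 1 else - c t)"
  have "(\<Sum>t\<in>insert b T. c' t *s t) = b + (\<Sum>t\<in>T. c' t *s t)"
    using T by (simp add: c'_def)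
  also have "(\<Sum>t\<in>T. c' t *s t) = (\<Sum>t\<in>T. - (c t *s t))"
    by (rule sum.cong) (use T in \<open>auto simp: c'_def vector_smult_lneg\<close>)
  also have "\<dots> = - (\<Sum>t\<in>T. c t *s t)" by (simp add: sum_negf)
  finally have "(\<Sum>t\<in>insert b T. c' t *s t) = b - (\<Sum>t\<in>T. c t *s t)" by simp
  then have "p dvd c' b"
    using s T b by (intro p_indepD[OF S, of "insert b T" c' b]) auto
  then show False using p by (simp add: c'_def)
qed

lemma indexed_basis_p_indep:
  assumes B: "indexed_basis N f" shows "p_indep q (f ` {..<N})"
  unfolding p_indep_def
proof safe
  fix T c t assume T: "finite T" "T \<subseteq> f ` {..<N}" and s: "(\<Sum>t\<in>T. c t *s t) \<in> smul_set q" and t: "t \<in> T"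
  obtain j where j: "j < N" "t = f j" using T t by auto
  have "(\<Sum>j<N. (if f j \<in> T then c (f j) else 0) *s f j) \<in> smul_set q"
    using s unfolding sum_smult_image_as_indexed[OF indexed_basis_inj[OF B] T(2)] .
  from indexed_basis_coeff_dvd[OF B this j(1)] show "q dvd c t" using j t by simp
qed

lemma rbasis_p_indep:
  assumes R: "rbasis (S::('a::idom^'k) set)" shows "p_indep p S"
  unfolding p_indep_def
proof safe
  fix T c t assume T: "finite T" "T \<subseteq> S" and s: "(\<Sum>t\<in>T. c t *s t) \<in> smul_set p" and t: "t \<in> T"
  obtain w where w: "(\<Sum>t\<in>T. c t *s t) = p *s w" using s unfolding smul_set_def by blast
  obtain T' c' where T': "finite T'" "T' \<subseteq> S" "w = (\<Sum>t\<in>T'. c' t *s t)" using rbasis_span[OF R] by blast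
  define U where "U = T \<union> T'"
  have U: "finite U" "U \<subseteq> S" using T T' by (auto simp: U_def)
  have "(\<Sum>t\<in>U. ((if t \<in> T then c t else 0) - p * (if t \<in> T' then c' t else 0)) *s t)
      = (\<Sum>t\<in>U. (if t \<in> T then c t else 0) *s t) - p *s (\<Sum>t\<in>U. (if t \<in> T' then c' t else 0) *s t)"
    by (simp add: vector_sub_rdistrib sum_subtractf sum_cmul[symmetric] vector_smult_assoc)
  also have "\<dots> = 0" using w T' T by (simp add: sum_smult_extend U_def)
  finally have "(if t \<in> T then c t else 0) - p * (if t \<in> T' then c' t else 0) = 0"
    by (rule rbasis_indep[OF R U(1) U(2)]) (use t in \<open>simp add: U_def\<close>)
  then have "c t = p * (if t \<in> T' then c' t else 0)" using t by simp
  then show "p dvd c t" by simp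
qed

lemma p_indep_extend_indexed_basis:
  assumes p: "dvr_unif p" and B: "indexed_basis N (f::nat \<Rightarrow> 'a::idom^'k)"
    and S: "finite S" "p_indep p (S::('a^'k) set)"
  shows "\<exists>g. indexed_basis N g \<and> S \<subseteq> g ` {..<N}"
  using S
proof (induction S rule: finite_induct)
  case empty show ?case using B by blast
next
  case (insert s S)
  obtain g where g: "indexed_basis N g" "S \<subseteq> g ` {..<N}"
    using insert p_indep_subset[OF insert.prems] by blast
  have inj: "inj_on g {..<N}" by (rule indexed_basis_inj[OF g(1)])
  obtain \<beta> where \<beta>: "s = (\<Sum>j<N. \<beta> j *s g j)" using indexed_basis_span[OF g(1)] by blast
  have "\<exists>j0<N. g j0 \<notin> S \<and> \<not> p dvd \<beta> j0"
  proof (rule ccontr)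
    assume "\<not> ?thesis"
    then have outside: "\<And>j. j < N \<Longrightarrow> g j \<notin> S \<Longrightarrow> p dvd \<beta> j" by blast
    define c where "c = (\<lambda>t. \<beta> (inv_into {..<N} g t))"
    have "(\<Sum>t\<in>S. c t *s t) = (\<Sum>j<N. (if g j \<in> S then \<beta> j else 0) *s g j)"
      unfolding sum_smult_image_as_indexed[OF inj g(2)]
      by (rule sum.cong) (auto simp: c_def inv_into_f_f[OF inj])
    then have "s - (\<Sum>t\<in>S. c t *s t) = (\<Sum>j<N. (\<beta> j - (if g j \<in> S then \<beta> j else 0)) *s g j)"
      unfolding \<beta> by (simp add: vector_sub_rdistrib sum_subtractf)
    also have "\<dots> = (\<Sum>j<N. (if g j \<in> S then 0 else \<beta> j) *s g j)"
      by (rule sum.cong) auto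
    also have "\<dots> \<in> smul_set p"
      by (rule smul_set_sum) (auto intro!: smul_set_smultI outside)
    finally show False
      using p_indep_not_congruent[OF dvr_unif_not_unit[OF p] insert.prems _ _ _ insert.hyps(2)] insert.hyps(1)
      by blast
  qed
  then obtain j0 where j0: "j0 < N" "g j0 \<notin> S" "\<not> p dvd \<beta> j0" by blast
  have "indexed_basis N (g(j0 := s))"
    by (rule indexed_basis_exchange[OF g(1) j0(1) \<beta> dvr_unif_unit_if_not_dvd[OF p j0(3)]])
  moreover have "insert s S \<subseteq> (g(j0 := s)) ` {..<N}"
  proof -
    have "S \<subseteq> (g(j0 := s)) ` {..<N}"
    proof
      fix t assume "t \<in> S"
      then obtain j where j: "j < N" "t = g j" using g(2) by auto
      then have "j \<noteq> j0" using j0(2) \<open>t \<in> S\<close> by auto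
      then show "t \<in> (g(j0 := s)) ` {..<N}" using j by (auto intro!: image_eqI[of _ _ j])
    qed
    then show ?thesis using j0(1) by (auto intro!: image_eqI[of _ _ j0])
  qed
  ultimately show ?case by blast
qed

lemma p_indep_finite:
  assumes p: "dvr_unif p" and S: "p_indep p (S::('a::idom^'k::finite) set)"
  shows "finite S"
proof (rule ccontr)
  assume "infinite S"
  then obtain S' where S': "finite S'" "card S' = Suc CARD('k)" "S' \<subseteq> S"
    using infinite_arbitrarily_large by blast
  obtain f :: "nat \<Rightarrow> 'a^'k" where "indexed_basis CARD('k) f" using indexed_basis_exists by blast
  then obtain g where "S' \<subseteq> g ` {..<CARD('k)}"
    using p_indep_extend_indexed_basis[OF p _ S'(1) p_indep_subset[OF S S'(3)]] by blast
  then have "card S' \<le> card (g ` {..<CARD('k)})" by (rule card_mono[rotated]) simp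
  also have "\<dots> \<le> CARD('k)" using card_image_le[of "{..<CARD('k)}" g] by simp
  finally show False using S'(2) by simp
qed

lemma p_indep_extend_rbasis:
  assumes p: "dvr_unif p" and S: "p_indep p (S::('a::idom^'k::finite) set)"
  shows "\<exists>C. rbasis C \<and> S \<subseteq> C"
proof -
  obtain f :: "nat \<Rightarrow> 'a^'k" where "indexed_basis CARD('k) f" using indexed_basis_exists by blast
  then obtain g where "indexed_basis CARD('k) g" "S \<subseteq> g ` {..<CARD('k)}"
    using p_indep_extend_indexed_basis[OF p _ p_indep_finite[OF p S] S] by blast
  then show ?thesis using indexed_basis_rbasis by blast
qed

lemma p_indep_spanning_rbasis:
  assumes p: "dvr_unif p" and S: "p_indep p (S::('a::idom^'k::finite) set)"
    and span: "\<And>x. \<exists>T c. finite T \<and> T \<subseteq> S \<and> x - (\<Sum>t\<in>T. c t *s t) \<in> smul_set p"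
  shows "rbasis S \<and> finite S \<and> card S = CARD('k)"
proof -
  obtain f :: "nat \<Rightarrow> 'a^'k" where f: "indexed_basis CARD('k) f" using indexed_basis_exists by blast
  obtain g where g: "indexed_basis CARD('k) g" "S \<subseteq> g ` {..<CARD('k)}"
    using p_indep_extend_indexed_basis[OF p f p_indep_finite[OF p S] S] by blast
  have "g j \<in> S" if j: "j < CARD('k)" for j
  proof (rule ccontr)
    assume nS: "g j \<notin> S"
    obtain T c where T: "finite T" "T \<subseteq> S" "g j - (\<Sum>t\<in>T. c t *s t) \<in> smul_set p" using span by blast
    have "T \<subseteq> g ` {..<CARD('k)}" "g j \<notin> T" using T(2) g(2) nS by auto
    with T(3) show False
      using p_indep_not_congruent[OF dvr_unif_not_unit[OF p] indexed_basis_p_indep[OF g(1)] _ T(1)] j by blast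
  qed
  then have "S = g ` {..<CARD('k)}" using g(2) by auto
  then show ?thesis
    using indexed_basis_rbasis[OF g(1)] indexed_basis_inj[OF g(1)] by (simp add: card_image)
qed

lemma rbasis_finite_card:
  assumes p: "dvr_unif (p::'a::idom)" and R: "rbasis (S::('a^'k::finite) set)"
  shows "finite S \<and> card S = CARD('k)"
proof -
  have "\<exists>T c. finite T \<and> T \<subseteq> S \<and> x - (\<Sum>t\<in>T. c t *s t) \<in> smul_set p" for x :: "'a^'k"
  proof -
    obtain T c where "finite T" "T \<subseteq> S" "x = (\<Sum>t\<in>T. c t *s t)" using rbasis_span[OF R] by blast
    then show ?thesis by (intro exI[of _ T] exI[of _ c]) simp
  qed
  then show ?thesis using p_indep_spanning_rbasis[OF p rbasis_p_indep[OF R]] by blast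
qed

section \<open>Existence of a Smith normal form\<close>

definition tail_span :: "nat \<Rightarrow> nat \<Rightarrow> (nat \<Rightarrow> 'a::idom^'k) \<Rightarrow> ('a^'k) set" where
  "tail_span k N f = {x. \<exists>e. x = (\<Sum>j\<in>{k..<N}. e j *s f j)}"

lemma tail_spanI: "x = (\<Sum>j\<in>{k..<N}. e j *s f j) \<Longrightarrow> x \<in> tail_span k N f"
  unfolding tail_span_def by blast

lemma tail_spanE:
  assumes "x \<in> tail_span k N f" obtains e where "x = (\<Sum>j\<in>{k..<N}. e j *s f j)"
  using assms unfolding tail_span_def by blast

lemma tail_span_zero [simp]: "0 \<in> tail_span k N f"
  by (rule tail_spanI[where e="\<lambda>_. 0"]) simp

lemma tail_span_add: "x \<in> tail_span k N f \<Longrightarrow> y \<in> tail_span k N f \<Longrightarrow> x + y \<in> tail_span k N f"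
proof -
  assume "x \<in> tail_span k N f" "y \<in> tail_span k N f"
  then obtain e e' where "x = (\<Sum>j\<in>{k..<N}. e j *s f j)" "y = (\<Sum>j\<in>{k..<N}. e' j *s f j)"
    by (elim tail_spanE)
  then have "x + y = (\<Sum>j\<in>{k..<N}. (e j + e' j) *s f j)" by (simp add: vector_sadd_rdistrib sum.distrib)
  then show ?thesis by (rule tail_spanI)
qed

lemma tail_span_smult: "x \<in> tail_span k N f \<Longrightarrow> c *s x \<in> tail_span k N f"
proof -
  assume "x \<in> tail_span k N f"
  then obtain e where "x = (\<Sum>j\<in>{k..<N}. e j *s f j)" by (elim tail_spanE)
  then have "c *s x = (\<Sum>j\<in>{k..<N}. (c * e j) *s f j)" by (simp add: sum_cmul[symmetric] vector_smult_assoc)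
  then show ?thesis by (rule tail_spanI)
qed

lemma tail_span_diff: "x \<in> tail_span k N f \<Longrightarrow> y \<in> tail_span k N f \<Longrightarrow> x - y \<in> tail_span k N f"
proof -
  assume "x \<in> tail_span k N f" "y \<in> tail_span k N f"
  then have "x + (-1) *s y \<in> tail_span k N f" by (intro tail_span_add tail_span_smult)
  moreover have "x + (-1) *s y = x - y" by (simp add: vec_eq_iff)
  ultimately show ?thesis by simp
qed

lemma tail_span_sum:
  "(\<And>i. i \<in> S \<Longrightarrow> g i \<in> tail_span k N f) \<Longrightarrow> (\<Sum>i\<in>S. g i) \<in> tail_span k N f"
  by (induct S rule: infinite_finite_induct) (auto intro: tail_span_add)

lemma tail_span_basis_vector: "j \<in> {k..<N} \<Longrightarrow> f j \<in> tail_span k N f"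
proof -
  assume j: "j \<in> {k..<N}"
  have "f j = (\<Sum>i\<in>{k..<N}. (if i = j then 1 else 0) *s f i)"
    using j by (simp add: if_distrib[of "\<lambda>c. c *s f _"] cong: if_cong)
  then show ?thesis by (rule tail_spanI)
qed

lemma tail_span_subset:
  assumes "\<And>j. j \<in> {k..<N} \<Longrightarrow> g j \<in> tail_span k N f"
  shows "tail_span k N g \<subseteq> tail_span k N f"
proof
  fix x assume "x \<in> tail_span k N g"
  then obtain e where e: "x = (\<Sum>j\<in>{k..<N}. e j *s g j)" by (elim tail_spanE)
  show "x \<in> tail_span k N f" unfolding e by (rule tail_span_sum) (rule tail_span_smult, rule assms)
qed

lemma sum_smult_tail_as_full:
  "(\<Sum>j\<in>{k..<N::nat}. e j *s (f j::'a::ring^'n)) = (\<Sum>j<N. (if k \<le> j then e j else 0) *s f j)"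
proof -
  have "(\<Sum>j<N. (if k \<le> j then e j else 0) *s f j) = (\<Sum>j<N. if j \<in> {k..<N} then e j *s f j else 0)"
    by (rule sum.cong) auto
  also have "\<dots> = (\<Sum>j\<in>{..<N} \<inter> {k..<N}. e j *s f j)" by (rule sum.inter_restrict[symmetric]) simp
  also have "{..<N} \<inter> {k..<N} = {k..<N}" by auto
  finally show ?thesis by simp
qed

lemma indexed_basis_tail_span_0: "indexed_basis N f \<Longrightarrow> x \<in> tail_span 0 N f"
  unfolding tail_span_def using indexed_basis_span[of N f x] by (simp add: atLeast0LessThan)

lemma matrix_vector_mult_tail_span:
  assumes "\<forall>i\<in>{k..<M}. (A::'a::idom^'m^'n) *v b i \<in> tail_span k N c"
    and "x \<in> tail_span k M b"
  shows "A *v x \<in> tail_span k N c"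
proof -
  obtain e where e: "x = (\<Sum>j\<in>{k..<M}. e j *s b j)" using assms(2) by (elim tail_spanE)
  show ?thesis unfolding e matrix_vector_mult_sum matrix_vector_mult_smult
    by (rule tail_span_sum) (rule tail_span_smult, use assms(1) in auto)
qed

lemma tail_span_coeffs_dvd:
  assumes "\<forall>j\<in>{k..<N}. q dvd e j"
  shows "\<exists>w\<in>tail_span k N f. (\<Sum>j\<in>{k..<N}. e j *s f j) = q *s w"
proof -
  have "\<forall>j\<in>{k..<N}. \<exists>z. e j = q * z" using assms by (auto simp: dvd_def)
  then obtain e' where e': "\<forall>j\<in>{k..<N}. e j = q * e' j" by metis
  have "(\<Sum>j\<in>{k..<N}. e j *s f j) = q *s (\<Sum>j\<in>{k..<N}. e' j *s f j)"
    using e' by (simp add: sum_cmul[symmetric] vector_smult_assoc)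
  then show ?thesis by (blast intro: tail_spanI)
qed

lemma indexed_basis_tail_span_cancel:
  assumes f: "indexed_basis N f" and c: "(c::'a::idom) \<noteq> 0" and y: "c *s y \<in> tail_span k N f"
  shows "y \<in> tail_span k N f"
proof -
  obtain e where e: "c *s y = (\<Sum>j\<in>{k..<N}. e j *s f j)" using y by (elim tail_spanE)
  obtain \<psi> where \<psi>: "y = (\<Sum>j<N. \<psi> j *s f j)" using indexed_basis_span[OF f] by blast
  have eq: "(\<Sum>j<N. (c * \<psi> j) *s f j) = (\<Sum>j<N. (if k \<le> j then e j else 0) *s f j)"
    using e unfolding \<psi> sum_smult_tail_as_full by (simp add: sum_cmul[symmetric] vector_smult_assoc)
  have "c * \<psi> j = 0" if "j < N" "j < k" for j
    using indexed_basis_coeff_eq[OF f eq that(1)] that(2) by simp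
  then have "y = (\<Sum>j\<in>{k..<N}. \<psi> j *s f j)"
    unfolding \<psi> sum_smult_tail_as_full using c by (intro sum.cong) auto
  then show ?thesis by (rule tail_spanI)
qed

lemma indexed_basis_tail_exchange:
  assumes f: "indexed_basis N (f::nat \<Rightarrow> 'a::idom^'n)" and i: "k \<le> i" "i < N"
    and v: "v = (\<Sum>j\<in>{k..<N}. e j *s f j)" and u: "e i dvd 1"
  shows "\<exists>g. indexed_basis N g \<and> g k = v \<and> (\<forall>j<k. g j = f j) \<and> tail_span k N g = tail_span k N f"
proof -
  define \<sigma> where "\<sigma> = id(k := i, i := k)"
  define g where "g = (f \<circ> \<sigma>)(k := v)"
  have \<sigma>: "bij_betw \<sigma> {..<N} {..<N}"
    by (rule bij_betw_byWitness[of _ \<sigma>]) (use i in \<open>auto simp: \<sigma>_def\<close>)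
  have "v = (\<Sum>j<N. (if k \<le> \<sigma> j then e (\<sigma> j) else 0) *s (f \<circ> \<sigma>) j)"
    unfolding v sum_smult_tail_as_full
    using sum.reindex_bij_betw[OF \<sigma>, of "\<lambda>j. (if k \<le> j then e j else 0) *s f j"] by simp
  then have g: "indexed_basis N g" unfolding g_def
    by (rule indexed_basis_exchange[OF indexed_basis_permute[OF f \<sigma>] le_less_trans[OF i]])
      (use u i in \<open>simp add: \<sigma>_def\<close>)
  have g_f: "g (\<sigma> j) = f j" if "j \<noteq> i" for j
    using that by (auto simp: g_def \<sigma>_def)
  have \<sigma>_tail: "\<sigma> j \<in> {k..<N}" if "j \<in> {k..<N}" for j
    using that i by (auto simp: \<sigma>_def)
  have "g j \<in> tail_span k N f" if j: "j \<in> {k..<N}" for j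
  proof (cases "j = k")
    case True then show ?thesis using v by (simp add: g_def tail_spanI)
  next
    case False
    then have "g j = f (\<sigma> j)" by (simp add: g_def)
    then show ?thesis using \<sigma>_tail[OF j] by (simp add: tail_span_basis_vector)
  qed
  then have sub: "tail_span k N g \<subseteq> tail_span k N f" by (rule tail_span_subset)
  have rest: "f j \<in> tail_span k N g" if j: "j \<in> {k..<N}" "j \<noteq> i" for j
    using g_f[OF j(2)] tail_span_basis_vector[OF \<sigma>_tail[OF j(1)], of g] by simp
  have "f i \<in> tail_span k N g"
  proof -
    obtain w where w: "e i * w = 1" using u by (metis dvd_def)
    have "v = e i *s f i + (\<Sum>j\<in>{k..<N} - {i}. e j *s f j)"
      unfolding v using i by (simp add: sum.remove[of _ i])
    then have "f i = w *s (v - (\<Sum>j\<in>{k..<N} - {i}. e j *s f j))"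
      using w by (simp add: vector_smult_assoc mult.commute)
    moreover have "v \<in> tail_span k N g"
      using tail_span_basis_vector[of k k N g] i by (simp add: g_def)
    moreover have "(\<Sum>j\<in>{k..<N} - {i}. e j *s f j) \<in> tail_span k N g"
      by (intro tail_span_sum tail_span_smult rest) auto
    ultimately show ?thesis by (simp add: tail_span_smult tail_span_diff)
  qed
  then have "tail_span k N f \<subseteq> tail_span k N g"
    using rest by (intro tail_span_subset) blast
  with sub g show ?thesis using i by (auto simp: g_def \<sigma>_def)
qed

text \<open>The pivot of the next elimination step: an element of the tail span whose image has
  minimal p-adic valuation s.\<close>

lemma tail_span_pivot:
  fixes A :: "'a::idom^'m^'n"
  assumes p: "dvr_unif p" and x1: "x1 \<in> tail_span k M b" "A *v x1 \<noteq> 0"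
  shows "\<exists>s x y e i. x = (\<Sum>j\<in>{k..<M}. e j *s b j) \<and> k \<le> i \<and> i < M \<and> \<not> p dvd e i \<and>
           A *v x = p ^ s *s y \<and> y \<notin> smul_set p \<and> (\<forall>x'\<in>tail_span k M b. A *v x' \<in> smul_set (p ^ s))"
proof -
  let ?T = "tail_span k M b"
  define P where "P = (\<lambda>s. \<exists>x\<in>?T. A *v x \<notin> smul_set (p ^ Suc s))"
  have "\<exists>s. P s"
    using dvr_unif_vec_exact_power[OF p x1(2)] x1(1) unfolding P_def by blast
  define s where "s = (LEAST s. P s)"
  have "P s" unfolding s_def by (rule LeastI_ex) fact
  then obtain x where x: "x \<in> ?T" "A *v x \<notin> smul_set (p ^ Suc s)" unfolding P_def by blast
  have min: "A *v x' \<in> smul_set (p ^ s)" if "x' \<in> ?T" for x'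
  proof (cases s)
    case (Suc s')
    then have "\<not> P s'" unfolding s_def using not_less_Least[of s' P] by simp
    then show ?thesis using that Suc unfolding P_def by blast
  qed simp
  obtain y where y: "A *v x = p ^ s *s y" using min[OF x(1)] unfolding smul_set_def by blast
  have y_np: "y \<notin> smul_set p"
  proof
    assume "y \<in> smul_set p"
    then have "A *v x \<in> smul_set (p ^ s * p)" unfolding y by (rule smul_set_smult_mult)
    then show False using x(2) by (simp add: mult.commute)
  qed
  obtain e where e: "x = (\<Sum>j\<in>{k..<M}. e j *s b j)" using x(1) by (elim tail_spanE)
  have "\<exists>i\<in>{k..<M}. \<not> p dvd e i"
  proof (rule ccontr)
    assume "\<not> ?thesis"
    then obtain w where w: "w \<in> ?T" "x = p *s w"
      using tail_span_coeffs_dvd[of k M p e b] unfolding e by blast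
    have "A *v x \<in> smul_set (p * p ^ s)"
      unfolding w(2) matrix_vector_mult_smult by (rule smul_set_smult_mult[OF min[OF w(1)]])
    then show False using x(2) by simp
  qed
  then obtain i where "k \<le> i" "i < M" "\<not> p dvd e i" by auto
  with e y y_np min show ?thesis by blast
qed

lemma indexed_basis_shear_off_pivot:
  fixes A :: "'a::idom^'m^'n"
  assumes b: "indexed_basis M b" and c: "indexed_basis N c" and k: "k < M" "k < N"
    and bk: "A *v b k = q *s c k"
    and tail: "\<And>i. k < i \<Longrightarrow> i < M \<Longrightarrow> A *v b i \<in> tail_span k N c \<and> A *v b i \<in> smul_set q"
  shows "\<exists>b'. indexed_basis M b' \<and> (\<forall>j\<le>k. b' j = b j) \<and>
           (\<forall>i. k < i \<and> i < M \<longrightarrow> A *v b' i \<in> tail_span (Suc k) N c)"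
proof -
  define E where "E = (\<lambda>i. SOME e. A *v b i = (\<Sum>j\<in>{k..<N}. e j *s c j))"
  have E: "A *v b i = (\<Sum>j\<in>{k..<N}. E i j *s c j)" if "k < i" "i < M" for i
  proof -
    have "\<exists>e. A *v b i = (\<Sum>j\<in>{k..<N}. e j *s c j)"
      using tail[OF that] unfolding tail_span_def by blast
    then show ?thesis unfolding E_def by (rule someI_ex)
  qed
  have "q dvd E i k" if "k < i" "i < M" for i
  proof -
    have "(\<Sum>j<N. (if k \<le> j then E i j else 0) *s c j) \<in> smul_set q"
      using tail[OF that] unfolding E[OF that] sum_smult_tail_as_full by blast
    from indexed_basis_coeff_dvd[OF c this k(2)] show ?thesis by simp
  qed
  then have "\<forall>i\<in>{k<..<M}. q dvd E i k" by simp
  from bchoice_dvd[OF this] obtain \<beta>0 where \<beta>0: "\<forall>i\<in>{k<..<M}. E i k = q * \<beta>0 i" by blast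
  define \<beta> where "\<beta> = (\<lambda>i. if i \<in> {k<..<M} then \<beta>0 i else 0)"
  have \<beta>: "E i k = q * \<beta> i" if "k < i" "i < M" for i
    using \<beta>0 that by (simp add: \<beta>_def)
  define b' where "b' = (\<lambda>j. b j - \<beta> j *s b k)"
  have "indexed_basis M b'" unfolding b'_def by (rule indexed_basis_shear[OF b k(1)]) (simp add: \<beta>_def)
  moreover have "\<forall>j\<le>k. b' j = b j" by (simp add: b'_def \<beta>_def)
  moreover have "A *v b' i \<in> tail_span (Suc k) N c" if i: "k < i" "i < M" for i
  proof -
    have "A *v b' i = (\<Sum>j\<in>{k..<N}. E i j *s c j) - (q * \<beta> i) *s c k"
      unfolding b'_def matrix_vector_mult_diff_distrib matrix_vector_mult_smult bk E[OF i]
      by (simp add: vector_smult_assoc mult.commute[of "\<beta> i"])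
    also have "\<dots> = (\<Sum>j\<in>{Suc k..<N}. E i j *s c j)"
      using \<beta>[OF i] k(2) by (simp add: sum.atLeast_Suc_lessThan)
    finally show ?thesis by (rule tail_spanI)
  qed
  ultimately show ?thesis by blast
qed

definition partial_snf ::
  "'a::idom^'m::finite^'n::finite \<Rightarrow> nat \<Rightarrow> (nat \<Rightarrow> 'a^'m) \<Rightarrow> (nat \<Rightarrow> 'a^'n) \<Rightarrow> (nat \<Rightarrow> 'a) \<Rightarrow> bool"
where
  "partial_snf A k bb cc d \<longleftrightarrow> indexed_basis CARD('m) bb \<and> indexed_basis CARD('n) cc \<and>
     (\<forall>j<k. A *v bb j = d j *s cc j) \<and>
     (\<forall>i. k \<le> i \<and> i < CARD('m) \<longrightarrow> A *v bb i \<in> tail_span k CARD('n) cc)"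

lemma partial_snf_Suc:
  fixes A :: "'a::idom^'m::finite^'n::finite" and p :: 'a
  assumes p: "dvr_unif p" and k: "k < CARD('m)" "k < CARD('n)" and I: "partial_snf A k bb cc d"
  shows "\<exists>bb' cc' d'. partial_snf A (Suc k) bb' cc' d'"
proof -
  let ?m = "CARD('m)" and ?n = "CARD('n)"
  have bb: "indexed_basis ?m bb" and cc: "indexed_basis ?n cc" and diag: "\<forall>j<k. A *v bb j = d j *s cc j"
    and tl: "\<forall>i\<in>{k..<?m}. A *v bb i \<in> tail_span k ?n cc"
    using I unfolding partial_snf_def by auto
  show ?thesis
  proof (cases "\<forall>i. k \<le> i \<and> i < ?m \<longrightarrow> A *v bb i = 0")
    case True
    then have "partial_snf A (Suc k) bb cc (d(k := 0))"
      using bb cc diag k unfolding partial_snf_def by (auto simp: less_Suc_eq)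
    then show ?thesis by blast
  next
    case False
    then obtain i0 where i0: "k \<le> i0" "i0 < ?m" "A *v bb i0 \<noteq> 0" by blast
    obtain s x y e i where x: "x = (\<Sum>j\<in>{k..<?m}. e j *s bb j)" and i: "k \<le> i" "i < ?m" "\<not> p dvd e i"
      and y: "A *v x = p ^ s *s y" "y \<notin> smul_set p"
      and min: "\<forall>x'\<in>tail_span k ?m bb. A *v x' \<in> smul_set (p ^ s)"
      using tail_span_pivot[OF p tail_span_basis_vector[of i0 k ?m bb] i0(3)] i0 by auto
    have "p ^ s *s y \<in> tail_span k ?n cc"
      unfolding y(1)[symmetric] using x by (intro matrix_vector_mult_tail_span[OF tl tail_spanI])
    then have "y \<in> tail_span k ?n cc"
      by (rule indexed_basis_tail_span_cancel[OF cc power_not_zero[OF dvr_unif_nonzero[OF p]]])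
    then obtain \<psi> where \<psi>: "y = (\<Sum>j\<in>{k..<?n}. \<psi> j *s cc j)" by (elim tail_spanE)
    have "\<exists>j\<in>{k..<?n}. \<not> p dvd \<psi> j"
    proof (rule ccontr)
      assume "\<not> ?thesis"
      then obtain w where "y = p *s w" using tail_span_coeffs_dvd[of k ?n p \<psi> cc] \<psi> by auto
      then show False using y(2) smul_set_smultI[of p p w] by simp
    qed
    then obtain j where j: "k \<le> j" "j < ?n" "\<not> p dvd \<psi> j" by auto
    obtain bb1 where bb1: "indexed_basis ?m bb1" "bb1 k = x" "\<forall>j<k. bb1 j = bb j"
        "tail_span k ?m bb1 = tail_span k ?m bb"
      using indexed_basis_tail_exchange[OF bb i(1,2) x dvr_unif_unit_if_not_dvd[OF p i(3)]] by blast
    obtain cc1 where cc1: "indexed_basis ?n cc1" "cc1 k = y" "\<forall>j<k. cc1 j = cc j"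
        "tail_span k ?n cc1 = tail_span k ?n cc"
      using indexed_basis_tail_exchange[OF cc j(1,2) \<psi> dvr_unif_unit_if_not_dvd[OF p j(3)]] by blast
    have pivot: "A *v bb1 k = p ^ s *s cc1 k" using y(1) bb1(2) cc1(2) by simp
    have "A *v bb1 i' \<in> tail_span k ?n cc1 \<and> A *v bb1 i' \<in> smul_set (p ^ s)" if "k < i'" "i' < ?m" for i'
    proof -
      have "bb1 i' \<in> tail_span k ?m bb"
        using tail_span_basis_vector[of i' k ?m bb1] that bb1(4) by simp
      moreover from this have "A *v bb1 i' \<in> tail_span k ?n cc"
        by (rule matrix_vector_mult_tail_span[OF tl])
      ultimately show ?thesis using min cc1(4) by simp
    qed
    from indexed_basis_shear_off_pivot[OF bb1(1) cc1(1) k pivot this]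
    obtain bb2 where bb2: "indexed_basis ?m bb2" "\<forall>j\<le>k. bb2 j = bb1 j"
        "\<forall>i'. k < i' \<and> i' < ?m \<longrightarrow> A *v bb2 i' \<in> tail_span (Suc k) ?n cc1"
      by blast
    have "A *v bb2 j' = (d(k := p ^ s)) j' *s cc1 j'" if "j' < Suc k" for j'
    proof (cases "j' = k")
      case True then show ?thesis using bb2(2) pivot by simp
    next
      case False
      then have "j' < k" using that by simp
      then show ?thesis using diag bb1(3) cc1(3) bb2(2) by simp
    qed
    then have "partial_snf A (Suc k) bb2 cc1 (d(k := p ^ s))"
      unfolding partial_snf_def using bb2(1,3) cc1(1) by (simp add: Suc_le_eq)
    then show ?thesis by blast
  qed
qed

lemma snf_pair_exists:
  fixes A :: "'a::idom^'m::finite^'n::finite" and p :: 'a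
  assumes p: "dvr_unif p"
  shows "\<exists>bb cc d. snf_pair A bb cc d"
proof -
  let ?m = "CARD('m)" and ?n = "CARD('n)"
  have "\<exists>bb cc d. partial_snf A k bb cc d" if "k \<le> min ?m ?n" for k
    using that
  proof (induction k)
    case 0
    obtain f1 :: "nat \<Rightarrow> 'a^'m" where f1: "indexed_basis ?m f1" using indexed_basis_exists by blast
    obtain f2 :: "nat \<Rightarrow> 'a^'n" where f2: "indexed_basis ?n f2" using indexed_basis_exists by blast
    have "partial_snf A 0 f1 f2 (\<lambda>_. 0)"
      unfolding partial_snf_def using f1 f2 indexed_basis_tail_span_0[OF f2] by auto
    then show ?case by blast
  next
    case (Suc k)
    then obtain bb cc d where "partial_snf A k bb cc d" by auto
    with Suc.prems show ?case by (intro partial_snf_Suc[OF p]) auto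
  qed
  then obtain bb cc d where I: "partial_snf A (min ?m ?n) bb cc d" by blast
  have "snf_pair A bb cc d" unfolding snf_pair_def
  proof (intro conjI allI impI)
    have bb: "indexed_basis ?m bb" and cc: "indexed_basis ?n cc" using I unfolding partial_snf_def by auto
    show "inj_on bb {..<?m}" "rbasis (bb ` {..<?m})" using indexed_basis_inj[OF bb] indexed_basis_rbasis[OF bb] .
    show "inj_on cc {..<?n}" "rbasis (cc ` {..<?n})" using indexed_basis_inj[OF cc] indexed_basis_rbasis[OF cc] .
    show "A *v bb j = d j *s cc j" if "j < min ?m ?n" for j
      using I that unfolding partial_snf_def by blast
  next
    fix j assume j: "min ?m ?n \<le> j \<and> j < ?m"
    then have "min ?m ?n = ?n" by linarith
    with I j have "A *v bb j \<in> tail_span ?n ?n cc" unfolding partial_snf_def by simp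
    then show "A *v bb j = 0" unfolding tail_span_def by simp
  qed
  then show ?thesis by blast
qed

section \<open>Smith normal forms with elementary divisors dividing p^l\<close>

lemma snf_pair_indexed_bases:
  fixes A :: "'a::idom^'m::finite^'n::finite"
  assumes "snf_pair A bb cc d"
  shows "indexed_basis CARD('m) bb" "indexed_basis CARD('n) cc"
  using assms rbasis_indexed_basis unfolding snf_pair_def by auto

lemma snf_pair_matrix_vector_mult:
  fixes A :: "'a::idom^'m::finite^'n::finite"
  assumes S: "snf_pair A bb cc d"
  shows "A *v (\<Sum>j<CARD('m). \<xi> j *s bb j) =
           (\<Sum>j<CARD('n). (\<xi> j * (if j < min CARD('m) CARD('n) then d j else 0)) *s cc j)"
proof -
  let ?m = "CARD('m)" and ?n = "CARD('n)" and ?k = "min CARD('m) CARD('n)"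
  have "A *v (\<Sum>j<?m. \<xi> j *s bb j) = (\<Sum>j<?m. if j < ?k then (\<xi> j * d j) *s cc j else 0)"
    using S unfolding snf_pair_def matrix_vector_mult_sum matrix_vector_mult_smult
    by (intro sum.cong) (auto simp: vector_smult_assoc)
  also have "\<dots> = (\<Sum>j<?k. (\<xi> j * d j) *s cc j)"
    by (rule sum.mono_neutral_cong_right) auto
  also have "\<dots> = (\<Sum>j<?n. if j < ?k then (\<xi> j * d j) *s cc j else 0)"
    by (rule sum.mono_neutral_cong_left) auto
  also have "\<dots> = (\<Sum>j<?n. (\<xi> j * (if j < ?k then d j else 0)) *s cc j)"
    by (intro sum.cong) auto
  finally show ?thesis .
qed

text \<open>The multiplicities are read off the particular Smith form chosen by SOME, so the
  bound on the elementary divisors holds for that Smith form only.\<close>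

lemma snf_pair_diag_dvd_power:
  fixes A :: "'a::idom^'m::finite^'n::finite" and p :: 'a
  assumes p: "dvr_unif p" and above_l: "\<forall>i>l. elem_div_mult p A i = 0"
  shows "\<exists>bb cc d. snf_pair A bb cc d \<and> (\<forall>j<min CARD('m) CARD('n). d j \<noteq> 0 \<longrightarrow> d j dvd p ^ l)"
proof -
  define d where "d = (SOME d. \<exists>bb cc. snf_pair A bb cc d)"
  have "\<exists>bb cc. snf_pair A bb cc d"
    unfolding d_def by (rule someI_ex[of "\<lambda>d. \<exists>bb cc. snf_pair A bb cc d"])
      (use snf_pair_exists[OF p, of A] in blast)
  moreover have "d j dvd p ^ l" if j: "j < min CARD('m) CARD('n)" "d j \<noteq> 0" for j
  proof -
    obtain u a where ua: "u dvd 1" "d j = u * p ^ a" using p j(2) unfolding dvr_unif_def by blast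
    have "a \<le> l"
    proof (rule ccontr)
      let ?J = "{j. j < min CARD('m) CARD('n) \<and> (\<exists>u. u dvd 1 \<and> d j = u * p ^ a)}"
      assume "\<not> a \<le> l"
      then have "card ?J = 0" using above_l unfolding elem_div_mult_def d_def Let_def by simp
      moreover have "finite ?J" by simp
      moreover have "j \<in> ?J" using j ua by auto
      ultimately show False using card_0_eq by blast
    qed
    moreover obtain w where "u * w = 1" using ua(1) by (metis dvd_def)
    ultimately have "p ^ l = u * p ^ a * (w * p ^ (l - a))"
      by (simp add: ac_simps power_add[symmetric])
    then show ?thesis using ua(2) by (metis dvd_triv_left)
  qed
  ultimately show ?thesis by blast
qed

lemma snf_pair_bounded_Mset_Suc:
  fixes A :: "'a::idom^'m::finite^'n::finite" and p :: 'a
  assumes p: "dvr_unif p" and S: "snf_pair A bb cc d"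
    and bound: "\<forall>j<min CARD('m) CARD('n). d j \<noteq> 0 \<longrightarrow> d j dvd p ^ l"
    and x: "x \<in> Mset p A (Suc l)"
  shows "\<exists>z\<in>kerset A. x - z \<in> smul_set p"
proof -
  let ?m = "CARD('m)" and ?n = "CARD('n)"
  define D where "D = (\<lambda>j. if j < min ?m ?n then d j else 0)"
  note bb = snf_pair_indexed_bases(1)[OF S] and cc = snf_pair_indexed_bases(2)[OF S]
  have AF: "A *v (\<Sum>j<?m. \<xi> j *s bb j) = (\<Sum>j<?n. (\<xi> j * D j) *s cc j)" for \<xi>
    unfolding D_def by (rule snf_pair_matrix_vector_mult[OF S])
  obtain \<xi> where \<xi>: "x = (\<Sum>j<?m. \<xi> j *s bb j)" using indexed_basis_span[OF bb] by blast
  have "p dvd \<xi> j" if j: "j < ?m" "D j \<noteq> 0" for j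
  proof -
    have jn: "j < ?n" using j by (auto simp: D_def split: if_splits)
    have "(\<Sum>j<?n. (\<xi> j * D j) *s cc j) \<in> smul_set (p ^ Suc l)"
      using x AF[of \<xi>] unfolding Mset_def \<xi> by simp
    from indexed_basis_coeff_dvd[OF cc this jn] have dvd: "p ^ l * p dvd \<xi> j * D j"
      by (simp add: mult.commute)
    obtain w where "p ^ l = D j * w" using bound j by (auto simp: D_def dvd_def split: if_splits)
    then have eq: "p ^ l * \<xi> j = (\<xi> j * D j) * w" by (simp add: ac_simps)
    have "p ^ l * p dvd p ^ l * \<xi> j" unfolding eq by (rule dvd_mult2[OF dvd])
    then show ?thesis using dvr_unif_nonzero[OF p] by simp
  qed
  define z where "z = (\<Sum>j<?m. (if D j = 0 then \<xi> j else 0) *s bb j)"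
  have "A *v z = 0" unfolding z_def AF by (rule sum.neutral) auto
  moreover have "x - z = (\<Sum>j<?m. (if D j = 0 then 0 else \<xi> j) *s bb j)"
    unfolding \<xi> z_def sum_subtractf[symmetric] by (rule sum.cong) (auto simp: vector_sub_rdistrib[symmetric])
  moreover have "\<dots> \<in> smul_set p"
    by (intro smul_set_sum smul_set_smultI) (auto intro: \<open>\<And>j. j < ?m \<Longrightarrow> D j \<noteq> 0 \<Longrightarrow> p dvd \<xi> j\<close>)
  ultimately show ?thesis unfolding kerset_def by auto
qed

lemma snf_pair_bounded_Nset_subset:
  fixes A :: "'a::idom^'m::finite^'n::finite" and p :: 'a
  assumes p: "dvr_unif p" and S: "snf_pair A bb cc d"
    and bound: "\<forall>j<min CARD('m) CARD('n). d j \<noteq> 0 \<longrightarrow> d j dvd p ^ l"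
  shows "Nset p A k \<subseteq> Nset p A l"
proof
  fix y assume "y \<in> Nset p A k"
  then obtain x where x: "A *v x = p ^ k *s y" unfolding Nset_def by blast
  let ?m = "CARD('m)" and ?n = "CARD('n)"
  define D where "D = (\<lambda>j. if j < min ?m ?n then d j else 0)"
  note bb = snf_pair_indexed_bases(1)[OF S] and cc = snf_pair_indexed_bases(2)[OF S]
  have AF: "A *v (\<Sum>j<?m. \<xi> j *s bb j) = (\<Sum>j<?n. (\<xi> j * D j) *s cc j)" for \<xi>
    unfolding D_def by (rule snf_pair_matrix_vector_mult[OF S])
  obtain \<xi> where \<xi>: "x = (\<Sum>j<?m. \<xi> j *s bb j)" using indexed_basis_span[OF bb] by blast
  obtain \<zeta> where \<zeta>: "y = (\<Sum>j<?n. \<zeta> j *s cc j)" using indexed_basis_span[OF cc] by blast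
  have coeffs: "(\<Sum>j<?n. (\<xi> j * D j) *s cc j) = (\<Sum>j<?n. (p ^ k * \<zeta> j) *s cc j)"
    using x unfolding \<xi> \<zeta> AF by (simp add: sum_cmul[symmetric] vector_smult_assoc)
  have eq: "\<xi> j * D j = p ^ k * \<zeta> j" if "j < ?n" for j
    by (rule indexed_basis_coeff_eq[OF cc coeffs that])
  have "D j dvd p ^ l * \<zeta> j" if j: "j < ?n" for j
  proof (cases "D j = 0")
    case True
    then have "\<zeta> j = 0" using eq[OF j] dvr_unif_nonzero[OF p] by simp
    then show ?thesis by simp
  next
    case False
    then show ?thesis using bound j by (auto simp: D_def split: if_splits)
  qed
  then have "\<forall>j\<in>{..<?n}. D j dvd p ^ l * \<zeta> j" by blast
  from bchoice_dvd[OF this] obtain \<xi>' where "\<forall>j\<in>{..<?n}. p ^ l * \<zeta> j = D j * \<xi>' j" by blast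
  then have \<xi>': "\<xi>' j * D j = p ^ l * \<zeta> j" if "j < ?n" for j
    using that by (simp add: mult.commute)
  have "A *v (\<Sum>j<?m. \<xi>' j *s bb j) = (\<Sum>j<?n. (p ^ l * \<zeta> j) *s cc j)"
    unfolding AF by (rule sum.cong) (simp_all add: \<xi>')
  also have "\<dots> = p ^ l *s y" unfolding \<zeta> by (simp add: sum_cmul[symmetric] vector_smult_assoc)
  finally show "y \<in> Nset p A l" unfolding Nset_def Mset_def by (auto simp: smul_set_def)
qed

definition finite_basis_of :: "('a::idom^'k) set \<Rightarrow> ('a^'k) set \<Rightarrow> bool" where
  "finite_basis_of L K \<longleftrightarrow> finite K \<and> K \<subseteq> L \<and>
     (\<forall>c. (\<Sum>t\<in>K. c t *s t) = 0 \<longrightarrow> (\<forall>t\<in>K. c t = 0)) \<and>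
     (\<forall>x\<in>L. \<exists>c. x = (\<Sum>t\<in>K. c t *s t))"

lemma snf_pair_kerset_finite_basis:
  fixes A :: "'a::idom^'m::finite^'n::finite"
  assumes S: "snf_pair A bb cc d"
  shows "\<exists>K. finite_basis_of (kerset A) K"
proof -
  let ?m = "CARD('m)" and ?n = "CARD('n)"
  define D where "D = (\<lambda>j. if j < min ?m ?n then d j else 0)"
  note bb = snf_pair_indexed_bases(1)[OF S] and cc = snf_pair_indexed_bases(2)[OF S]
  have AF: "A *v (\<Sum>j<?m. \<xi> j *s bb j) = (\<Sum>j<?n. (\<xi> j * D j) *s cc j)" for \<xi>
    unfolding D_def by (rule snf_pair_matrix_vector_mult[OF S])
  have inj: "inj_on bb {..<?m}" by (rule indexed_basis_inj[OF bb])
  define J where "J = {j\<in>{..<?m}. D j = 0}"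
  define K where "K = bb ` J"
  have sub: "K \<subseteq> kerset A"
  proof
    fix t assume "t \<in> K"
    then obtain j where j: "j < ?m" "D j = 0" "t = bb j" unfolding K_def J_def by auto
    have "A *v bb j = 0"
    proof (cases "j < min ?m ?n")
      case True then show ?thesis using S j(2) unfolding snf_pair_def D_def by simp
    next
      case False then show ?thesis using S j(1) unfolding snf_pair_def by simp
    qed
    then show "t \<in> kerset A" using j by (simp add: kerset_def)
  qed
  have fin: "finite K" and K_bb: "K \<subseteq> bb ` {..<?m}" by (auto simp: K_def J_def)
  have indep: "\<forall>t\<in>K. c t = 0" if "(\<Sum>t\<in>K. c t *s t) = 0" for c
    using rbasis_indep[OF indexed_basis_rbasis[OF bb] fin K_bb that] by blast
  have span: "\<exists>c. x = (\<Sum>t\<in>K. c t *s t)" if x: "x \<in> kerset A" for x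
  proof -
    obtain \<xi> where \<xi>: "x = (\<Sum>j<?m. \<xi> j *s bb j)" using indexed_basis_span[OF bb] by blast
    have img: "(\<Sum>j<?n. (\<xi> j * D j) *s cc j) = 0" using x AF[of \<xi>] unfolding kerset_def \<xi> by simp
    have "\<xi> j = 0" if "j < ?m" "D j \<noteq> 0" for j
    proof -
      have "j < ?n" using that by (auto simp: D_def split: if_splits)
      from indexed_basis_indep[OF cc img this] show ?thesis using that(2) by simp
    qed
    then have "x = (\<Sum>j\<in>J. \<xi> j *s bb j)"
      unfolding \<xi> J_def by (intro sum.mono_neutral_right) auto
    also have "\<dots> = (\<Sum>t\<in>K. \<xi> (inv_into J bb t) *s t)"
    proof -
      have injJ: "inj_on bb J" by (rule inj_on_subset[OF inj]) (auto simp: J_def)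
      show ?thesis unfolding K_def sum.reindex[OF injJ]
        by (rule sum.cong) (simp_all add: inv_into_f_f[OF injJ])
    qed
    finally show ?thesis by (rule exI[of _ "\<lambda>t. \<xi> (inv_into J bb t)"])
  qed
  have "finite_basis_of (kerset A) K"
    unfolding finite_basis_of_def using fin sub indep span by blast
  then show ?thesis by blast
qed

lemma bij_betw_lessThan_concat:
  assumes f: "bij_betw f {..<r::nat} X" and g: "bij_betw g {..<N - r} Y"
    and XY: "X \<inter> Y = {}" and r: "r \<le> N"
  shows "bij_betw (\<lambda>j. if j < r then f j else g (j - r)) {..<N} (X \<union> Y)"
proof -
  have "bij_betw (\<lambda>j. j - r) {r..<N} {..<N - r}"
    by (rule bij_betw_byWitness[of _ "\<lambda>j. j + r"]) (use r in auto)
  then have g': "bij_betw (\<lambda>j. g (j - r)) {r..<N} Y"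
    using bij_betw_trans[OF _ g] by (simp add: comp_def)
  have "bij_betw (\<lambda>j. if j \<in> {..<r} then f j else g (j - r)) ({..<r} \<union> {r..<N}) (X \<union> Y)"
    by (rule bij_betw_disjoint_Un[OF f g' _ XY]) auto
  moreover have "{..<r} \<union> {r..<N} = {..<N}" using r by auto
  ultimately show ?thesis by simp
qed

lemma snf_pair_of_matched_bases:
  fixes A :: "'a::idom^'m::finite^'n::finite" and p :: 'a
  assumes p: "dvr_unif p" and I: "finite I"
    and xs: "inj_on xs I" "rbasis (xs ` I \<union> K)" "xs ` I \<inter> K = {}" "K \<subseteq> kerset A"
    and ys: "inj_on ys I" "rbasis (ys ` I \<union> Z)" "ys ` I \<inter> Z = {}"
    and match: "\<forall>i\<in>I. A *v xs i = e i *s ys i"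
  shows "\<exists>bb cc d. snf_pair A bb cc d \<and> bb ` {..<CARD('m)} = xs ` I \<union> K \<and> cc ` {..<CARD('n)} = ys ` I \<union> Z"
proof -
  let ?m = "CARD('m)" and ?n = "CARD('n)"
  define r where "r = card I"
  obtain en where en: "bij_betw en {..<r} I"
    using ex_bij_betw_nat_finite[OF I] by (auto simp: r_def atLeast0LessThan)
  have card_xs: "card (xs ` I) = r" and card_ys: "card (ys ` I) = r"
    using card_image[OF xs(1)] card_image[OF ys(1)] by (simp_all add: r_def)
  obtain finK: "finite K" and cardK: "card K = ?m - r" and rm: "r \<le> ?m"
    using rbasis_finite_card[OF p xs(2)] card_Un_disjoint[OF finite_imageI[OF I] _ xs(3)] card_xs by fastforce
  obtain finZ: "finite Z" and cardZ: "card Z = ?n - r" and rn: "r \<le> ?n"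
    using rbasis_finite_card[OF p ys(2)] card_Un_disjoint[OF finite_imageI[OF I] _ ys(3)] card_ys by fastforce
  obtain eK where eK: "bij_betw eK {..<?m - r} K"
    using ex_bij_betw_nat_finite[OF finK] by (auto simp: cardK atLeast0LessThan)
  obtain eZ where eZ: "bij_betw eZ {..<?n - r} Z"
    using ex_bij_betw_nat_finite[OF finZ] by (auto simp: cardZ atLeast0LessThan)
  define bb where "bb = (\<lambda>j. if j < r then xs (en j) else eK (j - r))"
  define cc where "cc = (\<lambda>j. if j < r then ys (en j) else eZ (j - r))"
  define d where "d = (\<lambda>j. if j < r then e (en j) else 0)"
  have bb_bij: "bij_betw bb {..<?m} (xs ` I \<union> K)" unfolding bb_def
    using bij_betw_lessThan_concat[OF bij_betw_trans[OF en inj_on_imp_bij_betw[OF xs(1)]] eK xs(3) rm]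
    unfolding comp_def .
  have cc_bij: "bij_betw cc {..<?n} (ys ` I \<union> Z)" unfolding cc_def
    using bij_betw_lessThan_concat[OF bij_betw_trans[OF en inj_on_imp_bij_betw[OF ys(1)]] eZ ys(3) rn]
    unfolding comp_def .
  have en_I: "en j \<in> I" if "j < r" for j using en that by (auto simp: bij_betw_def)
  have ker: "A *v bb j = 0" if "r \<le> j" "j < ?m" for j
  proof -
    have "eK (j - r) \<in> K" using eK that by (auto simp: bij_betw_def)
    then show ?thesis using that xs(4) by (auto simp: bb_def kerset_def)
  qed
  have "snf_pair A bb cc d" unfolding snf_pair_def
  proof (intro conjI allI impI)
    show "inj_on bb {..<?m}" "rbasis (bb ` {..<?m})" using bb_bij xs(2) by (auto simp: bij_betw_def)
    show "inj_on cc {..<?n}" "rbasis (cc ` {..<?n})" using cc_bij ys(2) by (auto simp: bij_betw_def)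
  next
    fix j assume j: "j < min ?m ?n"
    show "A *v bb j = d j *s cc j"
    proof (cases "j < r")
      case True then show ?thesis using match en_I by (simp add: bb_def cc_def d_def)
    next
      case False then show ?thesis using ker j by (simp add: d_def)
    qed
  next
    fix j assume "min ?m ?n \<le> j \<and> j < ?m"
    with rm rn show "A *v bb j = 0" by (intro ker) auto
  qed
  then show ?thesis using bb_bij cc_bij by (auto simp: bij_betw_def)
qed

section \<open>Left Smith bases\<close>

locale left_snf_setup =
  fixes p :: "'a::idom" and A :: "'a^'m::finite^'n::finite" and l :: nat
    and Bs :: "nat \<Rightarrow> ('a^'m) set"
  assumes dvr: "dvr_unif p"
    and Mset_Suc_l: "\<And>x. x \<in> Mset p A (Suc l) \<Longrightarrow> \<exists>z\<in>kerset A. x - z \<in> smul_set p"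
    and kernel_part: "Bs (Suc l) \<subseteq> kerset A"
    and level_parts: "\<forall>i\<le>l. Bs i \<subseteq> Mset p A i"
    and kernel_basis: "modp_basis p (kerset A) (Bs (Suc l))"
    and level_bases: "\<forall>i\<le>l. modp_basis p (Mset p A i) (\<Union>j\<in>{i..Suc l}. Bs j)"
begin

definition B :: "('a^'m) set" where
  "B = (\<Union>j\<le>Suc l. Bs j)"

definition level :: "'a^'m \<Rightarrow> nat" where
  "level b = (GREATEST i. i \<le> l \<and> b \<in> Mset p A i)"

definition cofactor :: "'a^'m \<Rightarrow> 'a^'n" where
  "cofactor b = (SOME c. A *v b = p ^ level b *s c)"

lemma modp_basis_B: "modp_basis p UNIV B"
proof -
  have "(\<Union>j\<in>{0..Suc l}. Bs j) = B" by (auto simp: B_def)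
  moreover have "Mset p A 0 = UNIV" by (simp add: Mset_def)
  ultimately show ?thesis using level_bases by force
qed

lemma p_indep_B: "p_indep p B"
  by (rule modp_basis_p_indep[OF modp_basis_B])

lemma rbasis_B: "rbasis B"
  using p_indep_spanning_rbasis[OF dvr p_indep_B] modp_basis_span[OF modp_basis_B] by blast

lemma level_le: "level b \<le> l" and level_Mset: "b \<in> Mset p A (level b)"
  using GreatestI_nat[of "\<lambda>i. i \<le> l \<and> b \<in> Mset p A i" 0 l] unfolding level_def
  by (auto simp: Mset_def)

lemma level_greatest: "i \<le> l \<Longrightarrow> b \<in> Mset p A i \<Longrightarrow> i \<le> level b"
  unfolding level_def by (rule Greatest_le_nat[of _ i l]) auto

lemma cofactor: "A *v b = p ^ level b *s cofactor b"
proof -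
  have "\<exists>c. A *v b = p ^ level b *s c" using level_Mset[of b] unfolding Mset_def smul_set_def by blast
  then show ?thesis unfolding cofactor_def by (rule someI_ex)
qed

lemma Mset_Suc_congruent:
  assumes k: "k \<le> l" and x: "x \<in> Mset p A (Suc k)"
  shows "\<exists>T c. finite T \<and> T \<subseteq> B \<and> (\<forall>u\<in>T. u \<in> kerset A \<or> k < level u) \<and>
           x - (\<Sum>u\<in>T. c u *s u) \<in> smul_set p"
proof (cases "k < l")
  case True
  then have "modp_basis p (Mset p A (Suc k)) (\<Union>j\<in>{Suc k..Suc l}. Bs j)" using level_bases by simp
  from modp_basis_span[OF this x] obtain T c where T: "finite T" "T \<subseteq> (\<Union>j\<in>{Suc k..Suc l}. Bs j)"
      "x - (\<Sum>u\<in>T. c u *s u) \<in> smul_set p" by blast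
  have "u \<in> kerset A \<or> k < level u" if "u \<in> T" for u
  proof -
    obtain j where j: "Suc k \<le> j" "j \<le> Suc l" "u \<in> Bs j" using T(2) \<open>u \<in> T\<close> by force
    show ?thesis
    proof (cases "j = Suc l")
      case True then show ?thesis using kernel_part j by auto
    next
      case False
      then have "j \<le> l" using j by simp
      then have "u \<in> Mset p A j" using j(3) level_parts by blast
      with \<open>j \<le> l\<close> have "j \<le> level u" by (rule level_greatest)
      then show ?thesis using j(1) by simp
    qed
  qed
  moreover have "T \<subseteq> B" using T(2) unfolding B_def by force
  ultimately show ?thesis using T(1,3) by blast
next
  case False
  with k x obtain z where z: "z \<in> kerset A" "x - z \<in> smul_set p" using Mset_Suc_l by auto
  obtain T c where T: "finite T" "T \<subseteq> Bs (Suc l)" "z - (\<Sum>t\<in>T. c t *s t) \<in> smul_set p"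
    using modp_basis_span[OF kernel_basis z(1)] by blast
  have "x - (\<Sum>t\<in>T. c t *s t) = (x - z) + (z - (\<Sum>t\<in>T. c t *s t))" by simp
  also have "\<dots> \<in> smul_set p" using z(2) T(3) by (rule smul_set_add)
  finally show ?thesis using T(1,2) kernel_part by (auto simp: B_def intro!: exI[of _ T])
qed

text \<open>Among the coefficients not divisible by p, take one at a basis element b0 of greatest
  level k. Scaling the combination by p^k and lifting it through A gives an element of
  M_(k+1) whose expansion in B involves b0 with coefficient t b0, whereas
  Mset_Suc_congruent expands it modulo p without b0.\<close>

lemma cofactor_combination_mod_p:
  assumes T: "finite T" "T \<subseteq> B - kerset A" and s: "(\<Sum>b\<in>T. t b *s cofactor b) \<in> smul_set p"
  shows "\<forall>b\<in>T. p dvd t b"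
proof (rule ccontr)
  assume "\<not> (\<forall>b\<in>T. p dvd t b)"
  define U where "U = {b\<in>T. \<not> p dvd t b}"
  have U: "finite U" "U \<noteq> {}" using T(1) \<open>\<not> (\<forall>b\<in>T. p dvd t b)\<close> by (auto simp: U_def)
  define k where "k = Max (level ` U)"
  have "k \<in> level ` U" unfolding k_def by (rule Max_in) (use U in auto)
  then obtain b0 where b0: "b0 \<in> U" "level b0 = k" by auto
  have U_le: "level b \<le> k" if "b \<in> U" for b using U that unfolding k_def by (auto intro: Max_ge)
  define T0 where "T0 = {b\<in>T. level b \<le> k}"
  have T0: "finite T0" "T0 \<subseteq> T" using T by (auto simp: T0_def)
  define x where "x = (\<Sum>b\<in>T0. (t b * p ^ (k - level b)) *s b)"
  have Ax: "A *v x = (\<Sum>b\<in>T0. (t b * p ^ k) *s cofactor b)"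
    unfolding x_def matrix_vector_mult_sum matrix_vector_mult_smult
  proof (rule sum.cong)
    fix b assume "b \<in> T0"
    then have "p ^ (k - level b) * p ^ level b = p ^ k" by (simp add: T0_def power_add[symmetric])
    then show "(t b * p ^ (k - level b)) *s (A *v b) = (t b * p ^ k) *s cofactor b"
      unfolding cofactor[of b] vector_smult_assoc by (simp add: mult.assoc)
  qed simp
  have all: "(\<Sum>b\<in>T. (t b * p ^ k) *s cofactor b) \<in> smul_set (p ^ Suc k)"
  proof -
    have "(\<Sum>b\<in>T. (t b * p ^ k) *s cofactor b) = p ^ k *s (\<Sum>b\<in>T. t b *s cofactor b)"
      by (simp add: sum_cmul[symmetric] vector_smult_assoc mult.commute)
    also have "\<dots> \<in> smul_set (p ^ k * p)" by (rule smul_set_smult_mult[OF s])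
    finally show ?thesis by (simp add: mult.commute)
  qed
  have rest: "(\<Sum>b\<in>T - T0. (t b * p ^ k) *s cofactor b) \<in> smul_set (p ^ Suc k)"
  proof (rule smul_set_sum, rule smul_set_smultI)
    fix b assume b: "b \<in> T - T0"
    then have "p dvd t b" using U_le by (force simp: T0_def U_def)
    then show "p ^ Suc k dvd t b * p ^ k" by (simp add: mult_dvd_mono mult.commute)
  qed
  have "A *v x = (\<Sum>b\<in>T. (t b * p ^ k) *s cofactor b) - (\<Sum>b\<in>T - T0. (t b * p ^ k) *s cofactor b)"
    unfolding Ax sum.subset_diff[OF T0(2) T(1)] by simp
  also have "\<dots> \<in> smul_set (p ^ Suc k)" using all rest by (rule smul_set_diff)
  finally have x: "x \<in> Mset p A (Suc k)" by (simp add: Mset_def)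
  have "k \<le> l" using level_le[of b0] b0(2) by simp
  from Mset_Suc_congruent[OF this x]
  obtain T' c' where T': "finite T'" "T' \<subseteq> B" "\<forall>u\<in>T'. u \<in> kerset A \<or> k < level u"
      "x - (\<Sum>u\<in>T'. c' u *s u) \<in> smul_set p"
    by (elim exE conjE)
  have disj: "T0 \<inter> T' = {}" using T'(3) T(2) by (auto simp: T0_def)
  define C where "C = (\<lambda>b. if b \<in> T0 then t b * p ^ (k - level b) else - c' b)"
  have "(\<Sum>b\<in>T0 \<union> T'. C b *s b) = (\<Sum>b\<in>T0. C b *s b) + (\<Sum>b\<in>T'. C b *s b)"
    by (rule sum.union_disjoint[OF T0(1) T'(1) disj])
  also have "(\<Sum>b\<in>T0. C b *s b) = x" unfolding x_def by (rule sum.cong) (auto simp: C_def)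
  also have "(\<Sum>b\<in>T'. C b *s b) = - (\<Sum>b\<in>T'. c' b *s b)"
    using disj by (auto simp: C_def vector_smult_lneg sum_negf[symmetric] intro!: sum.cong)
  finally have "(\<Sum>b\<in>T0 \<union> T'. C b *s b) \<in> smul_set p" using T'(4) by simp
  moreover have "T0 \<union> T' \<subseteq> B" using T0(2) T(2) T'(2) by auto
  moreover have "b0 \<in> T0" using b0 by (auto simp: U_def T0_def)
  ultimately have "p dvd C b0" using T0(1) T'(1) by (intro p_indepD[OF p_indep_B, of "T0 \<union> T'" C b0]) auto
  then show False using \<open>b0 \<in> T0\<close> b0 by (simp add: C_def U_def)
qed

lemma cofactor_inj_on: "inj_on cofactor (B - kerset A)"
proof (rule inj_onI)
  fix b b' assume bb': "b \<in> B - kerset A" "b' \<in> B - kerset A" "cofactor b = cofactor b'"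
  show "b = b'"
  proof (rule ccontr)
    assume ne: "b \<noteq> b'"
    define t where "t = (\<lambda>x. if x = b then (1::'a) else -1)"
    have "(\<Sum>x\<in>{b, b'}. t x *s cofactor x) = 0" using ne bb'(3) by (simp add: t_def vector_smult_lneg)
    then have "p dvd t b" using bb' ne by (intro cofactor_combination_mod_p[rule_format, of "{b, b'}" t b]) auto
    then show False using dvr_unif_not_unit[OF dvr] by (simp add: t_def)
  qed
qed

lemma cofactor_p_indep: "p_indep p (cofactor ` (B - kerset A))"
  unfolding p_indep_def
proof (intro allI impI ballI)
  fix T c t assume T: "finite T \<and> T \<subseteq> cofactor ` (B - kerset A) \<and> (\<Sum>t\<in>T. c t *s t) \<in> smul_set p"
    and t: "t \<in> T"
  define T1 where "T1 = {b\<in>B - kerset A. cofactor b \<in> T}"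
  have T1: "T1 \<subseteq> B - kerset A" "cofactor ` T1 = T" using T by (auto simp: T1_def)
  have inj: "inj_on cofactor T1" by (rule inj_on_subset[OF cofactor_inj_on T1(1)])
  have fin: "finite T1" using T T1(2) finite_image_iff[OF inj] by simp
  have "(\<Sum>b\<in>T1. c (cofactor b) *s cofactor b) \<in> smul_set p"
    using T unfolding T1(2)[symmetric] sum.reindex[OF inj] by simp
  from cofactor_combination_mod_p[OF fin T1(1) this] show "p dvd c t"
    using t T1(2) by auto
qed

lemma left_snf_basis_B: "left_snf_basis A B"
proof -
  obtain C where C: "rbasis C" "cofactor ` (B - kerset A) \<subseteq> C"
    using p_indep_extend_rbasis[OF dvr cofactor_p_indep] by blast
  have "\<exists>bb cc d. snf_pair A bb cc d \<and> bb ` {..<CARD('m)} = id ` (B - kerset A) \<union> B \<inter> kerset A \<and>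
      cc ` {..<CARD('n)} = cofactor ` (B - kerset A) \<union> (C - cofactor ` (B - kerset A))"
  proof (rule snf_pair_of_matched_bases[OF dvr])
    show "finite (B - kerset A)" using rbasis_finite_card[OF dvr rbasis_B] by simp
    show "rbasis (id ` (B - kerset A) \<union> B \<inter> kerset A)" using rbasis_B by (simp add: Un_Diff_Int)
    show "rbasis (cofactor ` (B - kerset A) \<union> (C - cofactor ` (B - kerset A)))"
      using C by (simp add: Un_absorb1)
    show "\<forall>b\<in>B - kerset A. A *v id b = p ^ level b *s cofactor b" using cofactor by simp
  qed (auto simp: cofactor_inj_on)
  then show ?thesis unfolding left_snf_basis_def by (auto simp: Un_Diff_Int)
qed

end

section \<open>Right Smith bases\<close>

locale right_snf_setup =
  fixes p :: "'a::idom" and A :: "'a^'m::finite^'n::finite" and l :: nat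
    and Cs :: "nat \<Rightarrow> ('a^'n) set" and K :: "('a^'m) set"
  assumes dvr: "dvr_unif p"
    and Nset_l: "\<And>k. Nset p A k \<subseteq> Nset p A l"
    and kernel_basis: "finite_basis_of (kerset A) K"
    and level_parts: "\<forall>i\<le>l. Cs i \<subseteq> Nset p A i"
    and level_bases: "\<forall>i\<le>l. modp_basis p (Nset p A i) (\<Union>j\<le>i. Cs j)"
    and rbasis_C: "rbasis (\<Union>j\<le>Suc l. Cs j)"
begin

definition C :: "('a^'n) set" where
  "C = (\<Union>j\<le>Suc l. Cs j)"

definition C_low :: "('a^'n) set" where
  "C_low = (\<Union>j\<le>l. Cs j)"

definition level :: "'a^'n \<Rightarrow> nat" where
  "level c = (LEAST i. c \<in> Cs i)"

definition lift :: "'a^'n \<Rightarrow> 'a^'m" where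
  "lift c = (SOME x. A *v x = p ^ level c *s c)"

lemma finite_C: "finite C"
  using rbasis_finite_card[OF dvr rbasis_C] by (simp add: C_def)

lemma C_low_subset: "C_low \<subseteq> C"
  unfolding C_def C_low_def by force

lemma finite_C_low: "finite C_low"
  using finite_subset[OF C_low_subset finite_C] .

lemma level_least: "c \<in> Cs j \<Longrightarrow> level c \<le> j"
  unfolding level_def by (rule Least_le)

lemma level_C_low: "c \<in> C_low \<Longrightarrow> c \<in> Cs (level c) \<and> level c \<le> l"
  unfolding C_low_def using LeastI[of "\<lambda>i. c \<in> Cs i"] level_least by (force simp: level_def)

lemma lift: "c \<in> C_low \<Longrightarrow> A *v lift c = p ^ level c *s c"
  using level_C_low[of c] level_parts unfolding lift_def Nset_def
  by (intro someI_ex[of "\<lambda>x. A *v x = p ^ level c *s c"]) blast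

lemma Nset_combination_mod_p:
  assumes z: "(\<Sum>b\<in>C. \<epsilon> b *s b) \<in> Nset p A k" and c: "c \<in> C" "c \<in> C_low \<Longrightarrow> k < level c"
  shows "p dvd \<epsilon> c"
proof -
  define k' where "k' = min k l"
  have z': "(\<Sum>b\<in>C. \<epsilon> b *s b) \<in> Nset p A k'"
    using z Nset_l[of k] by (cases "k \<le> l") (auto simp: k'_def)
  have "modp_basis p (Nset p A k') (\<Union>j\<le>k'. Cs j)" using level_bases by (simp add: k'_def)
  from modp_basis_span[OF this z'] obtain T \<mu> where T: "finite T" "T \<subseteq> (\<Union>j\<le>k'. Cs j)"
      "(\<Sum>b\<in>C. \<epsilon> b *s b) - (\<Sum>b\<in>T. \<mu> b *s b) \<in> smul_set p"
    by (elim exE conjE)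
  have T_C: "T \<subseteq> C" using T(2) unfolding C_def k'_def by force
  have "c \<notin> T"
  proof
    assume "c \<in> T"
    then obtain j where j: "j \<le> k'" "c \<in> Cs j" using T(2) by blast
    then have "c \<in> C_low" unfolding C_low_def k'_def by auto
    moreover have "level c \<le> k" using level_least[OF j(2)] j(1) by (simp add: k'_def)
    ultimately show False using c(2) by simp
  qed
  have "(\<Sum>b\<in>C. (\<epsilon> b - (if b \<in> T then \<mu> b else 0)) *s b) = (\<Sum>b\<in>C. \<epsilon> b *s b) - (\<Sum>b\<in>T. \<mu> b *s b)"
    unfolding vector_sub_rdistrib sum_subtractf sum_smult_extend[OF finite_C T_C] ..
  with T(3) have "(\<Sum>b\<in>C. (\<epsilon> b - (if b \<in> T then \<mu> b else 0)) *s b) \<in> smul_set p" by simp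
  from p_indepD[OF rbasis_p_indep[OF rbasis_C[folded C_def]] finite_C subset_refl this c(1)]
  have "p dvd \<epsilon> c - (if c \<in> T then \<mu> c else 0)" .
  then show ?thesis using \<open>c \<notin> T\<close> by simp
qed

text \<open>Induction on k: once the coefficients at the elements of level at most k are known
  to be divisible by the matching power of p, subtracting the corresponding lifts leaves
  p^k times an element of N_k, to which Nset_combination_mod_p applies.\<close>

lemma image_coeff_dvd:
  assumes "(\<Sum>b\<in>C. \<gamma> b *s b) = A *v x" "c \<in> C"
  shows "p ^ (if c \<in> C_low then min k (level c) else k) dvd \<gamma> c"
  using assms
proof (induction k arbitrary: \<gamma> x c)
  case 0 then show ?case by simp
next
  case (Suc k)
  define L where "L = {b\<in>C_low. level b \<le> k}"
  have L_C: "L \<subseteq> C" using C_low_subset by (auto simp: L_def)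
  have "\<forall>b\<in>L. p ^ level b dvd \<gamma> b"
  proof
    fix b assume b: "b \<in> L"
    with L_C have "p ^ (if b \<in> C_low then min k (level b) else k) dvd \<gamma> b" by (intro Suc.IH[OF Suc.prems(1)]) auto
    with b show "p ^ level b dvd \<gamma> b" by (simp add: L_def)
  qed
  from bchoice_dvd[OF this] obtain \<delta> where \<delta>: "\<And>b. b \<in> L \<Longrightarrow> \<gamma> b = p ^ level b * \<delta> b"
    by blast
  define \<gamma>' where "\<gamma>' = (\<lambda>b. if b \<in> L then 0 else \<gamma> b)"
  define x' where "x' = x - (\<Sum>b\<in>L. \<delta> b *s lift b)"
  have "(\<Sum>b\<in>L. \<gamma> b *s b) = A *v (\<Sum>b\<in>L. \<delta> b *s lift b)"
    unfolding matrix_vector_mult_sum matrix_vector_mult_smult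
    by (rule sum.cong) (auto simp: L_def \<delta> lift vector_smult_assoc mult.commute)
  moreover have "(\<Sum>b\<in>C. \<gamma> b *s b) = (\<Sum>b\<in>C. \<gamma>' b *s b) + (\<Sum>b\<in>L. \<gamma> b *s b)"
    unfolding sum_smult_extend[OF finite_C L_C, symmetric] sum.distrib[symmetric]
    by (rule sum.cong) (auto simp: \<gamma>'_def)
  ultimately have eq': "(\<Sum>b\<in>C. \<gamma>' b *s b) = A *v x'"
    using Suc.prems(1) by (simp add: x'_def matrix_vector_mult_diff_distrib)
  have "\<forall>b\<in>C. p ^ k dvd \<gamma>' b"
  proof
    fix b assume "b \<in> C"
    from Suc.IH[OF eq' this] show "p ^ k dvd \<gamma>' b" by (cases "b \<in> L") (auto simp: \<gamma>'_def L_def)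
  qed
  from bchoice_dvd[OF this] obtain \<epsilon> where \<epsilon>: "\<And>b. b \<in> C \<Longrightarrow> \<gamma>' b = p ^ k * \<epsilon> b"
    by blast
  have "A *v x' = p ^ k *s (\<Sum>b\<in>C. \<epsilon> b *s b)"
    unfolding eq'[symmetric] sum_cmul[symmetric] vector_smult_assoc by (rule sum.cong) (simp_all add: \<epsilon>)
  then have N: "(\<Sum>b\<in>C. \<epsilon> b *s b) \<in> Nset p A k"
    unfolding Nset_def Mset_def by (auto simp: smul_set_def)
  show ?case
  proof (cases "c \<in> L")
    case True
    then show ?thesis using \<delta>[OF True] by (auto simp: L_def min_def)
  next
    case False
    then have "p dvd \<epsilon> c" by (intro Nset_combination_mod_p[OF N Suc.prems(2)]) (auto simp: L_def)
    then have "p ^ Suc k dvd \<gamma> c" using \<epsilon>[OF Suc.prems(2)] False by (simp add: \<gamma>'_def mult_dvd_mono)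
    then show ?thesis using False by (auto simp: L_def)
  qed
qed

lemma image_coeff_outside_C_low:
  assumes "(\<Sum>b\<in>C. \<gamma> b *s b) = A *v x" "c \<in> C" "c \<notin> C_low"
  shows "\<gamma> c = 0"
proof (rule ccontr)
  assume "\<gamma> c \<noteq> 0"
  then obtain k where "\<not> p ^ k dvd \<gamma> c" using dvr_unif_not_all_powers_dvd[OF dvr] by blast
  with image_coeff_dvd[OF assms(1,2), of k] assms(3) show False by simp
qed

lemma image_coeff_C_low:
  assumes "(\<Sum>b\<in>C. \<gamma> b *s b) = A *v x" "c \<in> C_low"
  shows "p ^ level c dvd \<gamma> c"
  using image_coeff_dvd[OF assms(1), of c "level c"] assms(2) C_low_subset by auto

lemma lift_inj_on: "inj_on lift C_low"
proof (rule inj_onI)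
  fix a b assume ab: "a \<in> C_low" "b \<in> C_low" "lift a = lift b"
  show "a = b"
  proof (rule ccontr)
    assume ne: "a \<noteq> b"
    define t where "t = (\<lambda>c. if c = a then p ^ level a else - (p ^ level b))"
    have "p ^ level a *s a = p ^ level b *s b" using lift ab by metis
    then have "(\<Sum>c\<in>{a, b}. t c *s c) = 0" using ne by (simp add: t_def vector_smult_lneg)
    then have "t a = 0" using ab C_low_subset
      by (intro rbasis_indep[OF rbasis_C[folded C_def], of "{a, b}" t a]) auto
    then show False using dvr_unif_nonzero[OF dvr] by (simp add: t_def)
  qed
qed

lemma lift_notin_kerset: "c \<in> C_low \<Longrightarrow> lift c \<notin> kerset A"
  using lift rbasis_nonzero[OF rbasis_C[folded C_def]] C_low_subset dvr_unif_nonzero[OF dvr]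
  by (auto simp: kerset_def)

lemma lift_kernel_indep:
  assumes T: "finite T" "T \<subseteq> lift ` C_low \<union> K" and s: "(\<Sum>t\<in>T. c t *s t) = 0" and t: "t \<in> T"
  shows "c t = 0"
proof -
  have K: "finite K" "K \<subseteq> kerset A" "\<And>c. (\<Sum>t\<in>K. c t *s t) = 0 \<Longrightarrow> \<forall>t\<in>K. c t = 0"
    using kernel_basis unfolding finite_basis_of_def by blast+
  define TX where "TX = T - K"
  define TK where "TK = T \<inter> K"
  have T_eq: "T = TX \<union> TK" and disj: "TX \<inter> TK = {}" and fin: "finite TX" "finite TK"
    using T(1) by (auto simp: TX_def TK_def)
  define TC where "TC = {b\<in>C_low. lift b \<in> TX}"
  have TC: "finite TC" "TC \<subseteq> C_low" "lift ` TC = TX"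
    using T finite_subset[OF _ finite_C_low] by (auto simp: TC_def TX_def)
  have inj: "inj_on lift TC" by (rule inj_on_subset[OF lift_inj_on TC(2)])
  have "0 = A *v (\<Sum>t\<in>T. c t *s t)" using s by simp
  also have "\<dots> = (\<Sum>t\<in>TX. c t *s (A *v t)) + (\<Sum>t\<in>TK. c t *s (A *v t))"
    unfolding T_eq sum.union_disjoint[OF fin disj] matrix_vector_right_distrib
      matrix_vector_mult_sum matrix_vector_mult_smult ..
  also have "\<dots> = (\<Sum>t\<in>TX. c t *s (A *v t))"
    using K(2) by (auto simp: TK_def kerset_def intro!: sum.neutral)
  also have "\<dots> = (\<Sum>b\<in>TC. (c (lift b) * p ^ level b) *s b)"
    unfolding TC(3)[symmetric] sum.reindex[OF inj] using TC(2) by (auto simp: lift vector_smult_assoc intro!: sum.cong)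
  finally have TC_sum: "(\<Sum>b\<in>TC. (c (lift b) * p ^ level b) *s b) = 0" by simp
  have cX: "c u = 0" if u: "u \<in> TX" for u
  proof -
    obtain b where b: "b \<in> TC" "u = lift b" using u TC(3) by auto
    have "c (lift b) * p ^ level b = 0"
      by (rule rbasis_indep[OF rbasis_C[folded C_def] TC(1) _ TC_sum b(1)]) (use TC(2) C_low_subset in auto)
    then show ?thesis using b dvr_unif_nonzero[OF dvr] by simp
  qed
  have "(\<Sum>u\<in>TK. c u *s u) = 0" using s cX unfolding T_eq sum.union_disjoint[OF fin disj] by simp
  then have "(\<Sum>u\<in>K. (if u \<in> TK then c u else 0) *s u) = 0"
    using sum_smult_extend[OF K(1), of TK c] by (simp add: TK_def)
  then have cK: "c u = 0" if "u \<in> TK" for u using K(3) that by (fastforce simp: TK_def)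
  show ?thesis using t cX cK by (auto simp: TX_def TK_def)
qed

lemma lift_kernel_span: "\<exists>T c. finite T \<and> T \<subseteq> lift ` C_low \<union> K \<and> x = (\<Sum>t\<in>T. c t *s t)"
proof -
  from rbasis_span[OF rbasis_C[folded C_def], of "A *v x"]
  obtain T0 \<gamma>0 where T0: "finite T0" "T0 \<subseteq> C" "A *v x = (\<Sum>t\<in>T0. \<gamma>0 t *s t)"
    by (elim exE conjE)
  define \<gamma> where "\<gamma> = (\<lambda>t. if t \<in> T0 then \<gamma>0 t else 0)"
  have eq: "(\<Sum>c\<in>C. \<gamma> c *s c) = A *v x" unfolding \<gamma>_def T0(3) by (rule sum_smult_extend[OF finite_C T0(2)])
  have "\<forall>b\<in>C_low. p ^ level b dvd \<gamma> b" using image_coeff_C_low[OF eq] by blast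
  from bchoice_dvd[OF this] obtain \<delta> where \<delta>: "\<And>b. b \<in> C_low \<Longrightarrow> \<gamma> b = p ^ level b * \<delta> b" by blast
  define y where "y = (\<Sum>b\<in>C_low. \<delta> b *s lift b)"
  have "A *v y = (\<Sum>b\<in>C_low. \<gamma> b *s b)" unfolding y_def matrix_vector_mult_sum matrix_vector_mult_smult
    by (rule sum.cong) (auto simp: lift \<delta> vector_smult_assoc mult.commute)
  also have "\<dots> = (\<Sum>b\<in>C. \<gamma> b *s b)"
    by (rule sum.mono_neutral_left[OF finite_C C_low_subset]) (auto simp: image_coeff_outside_C_low[OF eq])
  finally have "x - y \<in> kerset A" using eq by (simp add: kerset_def matrix_vector_mult_diff_distrib)
  with kernel_basis obtain \<kappa> where \<kappa>: "x - y = (\<Sum>t\<in>K. \<kappa> t *s t)"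
    unfolding finite_basis_of_def by (elim conjE bspec[elim_format] exE)
  have fin: "finite C_low" "finite K"
    using finite_C_low kernel_basis by (auto simp: finite_basis_of_def)
  define co where "co = (\<lambda>t. if t \<in> K then \<kappa> t else \<delta> (inv_into C_low lift t))"
  have notK: "lift b \<notin> K" if "b \<in> C_low" for b
    using lift_notin_kerset[OF that] kernel_basis by (auto simp: finite_basis_of_def)
  then have disj: "lift ` C_low \<inter> K = {}" by blast
  have "(\<Sum>b\<in>C_low. \<delta> b *s lift b) = (\<Sum>t\<in>lift ` C_low. co t *s t)"
    unfolding sum.reindex[OF lift_inj_on] by (rule sum.cong) (simp_all add: co_def notK inv_into_f_f[OF lift_inj_on])
  moreover have "(\<Sum>t\<in>K. \<kappa> t *s t) = (\<Sum>t\<in>K. co t *s t)" by (simp add: co_def)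
  ultimately have "x = (\<Sum>t\<in>lift ` C_low \<union> K. co t *s t)"
    using \<kappa> fin disj by (simp add: y_def sum.union_disjoint algebra_simps)
  then show ?thesis using fin by (intro exI[of _ "lift ` C_low \<union> K"] exI[of _ co]) simp
qed

lemma right_snf_basis_C: "right_snf_basis A C"
proof -
  have X: "rbasis (lift ` C_low \<union> K)" unfolding rbasis_def using lift_kernel_indep lift_kernel_span by blast
  have XK: "lift ` C_low \<inter> K = {}" "K \<subseteq> kerset A"
    using lift_notin_kerset kernel_basis by (auto simp: finite_basis_of_def)
  have Y: "rbasis (id ` C_low \<union> (C - C_low))" "id ` C_low \<inter> (C - C_low) = {}"
    using rbasis_C C_low_subset by (auto simp: C_def Un_absorb1)
  have match: "\<forall>c\<in>C_low. A *v lift c = p ^ level c *s id c" using lift by simp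
  from snf_pair_of_matched_bases[OF dvr finite_C_low lift_inj_on X XK inj_on_id Y match]
  obtain bb cc d where "snf_pair A bb cc d" "cc ` {..<CARD('n)} = id ` C_low \<union> (C - C_low)"
    by (elim exE conjE)
  moreover have "id ` C_low \<union> (C - C_low) = C" using C_low_subset by auto
  ultimately show ?thesis unfolding right_snf_basis_def by auto
qed

end

text \<open>The hypotheses A \<noteq> 0 and e_l \<noteq> 0 only make l the largest level; the proof needs
  merely that no elementary divisor is a power of p above p^l.\<close>

theorem lemma2:
  fixes p :: "'a::idom" and A :: "'a ^ 'm::finite ^ 'n::finite" and l :: nat
  assumes "dvr_unif p"
    and "A \<noteq> 0"
    and "elem_div_mult p A l \<noteq> 0"
    and "\<forall>i>l. elem_div_mult p A i = 0"
  shows "(\<forall>Bs :: nat \<Rightarrow> ('a ^ 'm) set.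
            Bs (Suc l) \<subseteq> kerset A \<and> (\<forall>i\<le>l. Bs i \<subseteq> Mset p A i) \<and>
            modp_basis p (kerset A) (Bs (Suc l)) \<and>
            (\<forall>i\<le>l. modp_basis p (Mset p A i) (\<Union>j\<in>{i..Suc l}. Bs j))
            \<longrightarrow> left_snf_basis A (\<Union>j\<le>Suc l. Bs j))
       \<and> (\<forall>Cs :: nat \<Rightarrow> ('a ^ 'n) set.
            (\<forall>i\<le>l. Cs i \<subseteq> Nset p A i) \<and>
            (\<forall>i\<le>l. modp_basis p (Nset p A i) (\<Union>j\<le>i. Cs j)) \<and>
            rbasis (\<Union>j\<le>Suc l. Cs j)
            \<longrightarrow> right_snf_basis A (\<Union>j\<le>Suc l. Cs j))"
proof -
  obtain bb cc d where S: "snf_pair A bb cc d"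
    and bound: "\<forall>j<min CARD('m) CARD('n). d j \<noteq> 0 \<longrightarrow> d j dvd p ^ l"
    using snf_pair_diag_dvd_power[OF assms(1,4)] by blast
  obtain K where K: "finite_basis_of (kerset A) K" using snf_pair_kerset_finite_basis[OF S] by blast
  show ?thesis
  proof (intro conjI allI impI)
    fix Bs :: "nat \<Rightarrow> ('a ^ 'm) set"
    assume "Bs (Suc l) \<subseteq> kerset A \<and> (\<forall>i\<le>l. Bs i \<subseteq> Mset p A i) \<and>
      modp_basis p (kerset A) (Bs (Suc l)) \<and> (\<forall>i\<le>l. modp_basis p (Mset p A i) (\<Union>j\<in>{i..Suc l}. Bs j))"
    then interpret left_snf_setup p A l Bs
      using assms(1) snf_pair_bounded_Mset_Suc[OF assms(1) S bound] by unfold_locales auto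
    show "left_snf_basis A (\<Union>j\<le>Suc l. Bs j)" using left_snf_basis_B by (simp add: B_def)
  next
    fix Cs :: "nat \<Rightarrow> ('a ^ 'n) set"
    assume "(\<forall>i\<le>l. Cs i \<subseteq> Nset p A i) \<and> (\<forall>i\<le>l. modp_basis p (Nset p A i) (\<Union>j\<le>i. Cs j)) \<and>
      rbasis (\<Union>j\<le>Suc l. Cs j)"
    then interpret right_snf_setup p A l Cs K
      using assms(1) snf_pair_bounded_Nset_subset[OF assms(1) S bound] K by unfold_locales auto
    show "right_snf_basis A (\<Union>j\<le>Suc l. Cs j)" using right_snf_basis_C by (simp add: C_def)
  qed
qed

end
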